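(* Let $0<\varepsilon\le1$ and $0<\alpha<1/2$ be constants, let $\bar s$ be an integer with $|\bar s|\le(1-\varepsilon)n$, and let $n'$ be a number with $n^{1/2+\alpha}<n'<n$. Assume that $\beta\le n^{-24}$ and that $V$ is a multiset in $\mathbb R^2$ of $n$ elements such that no $n-n'$ of its elements are all $\beta n^6$-close to a common point. Then $\rho^\ast_\beta(V)=O(\sqrt n/n')$.
   Context: For a multiset $V=\{v_1,\dots,v_n\}\subset\mathbb R^2$ and $\beta>0$, $\rho^\ast_\beta(V)=\sup_{v\in\mathbb R^2}\mathbb P_{\mathbf x}(v_1x_1+\dots+v_nx_n\in B(v,\beta))$, where $\mathbf x=(x_1,\dots,x_n)$ is uniform over all vectors in $\{-1,1\}^n$ with coordinate sum $\bar s$ and $B(v,\beta)$ is the closed disk of radius $\beta$ centered at $v$. A point $v$ is $\delta$-close to a point $q$ if $\|v-q\|\le\delta$. *)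

theory Defs
  imports "HOL-Analysis.Analysis"
begin

definition sign_vecs :: "nat \<Rightarrow> int \<Rightarrow> (nat \<Rightarrow> int) set" where
  "sign_vecs n s = {x \<in> PiE {..<n} (\<lambda>_. {-1, 1}). (\<Sum>i<n. x i) = s}"

definition small_ball_prob ::
  "nat \<Rightarrow> (nat \<Rightarrow> real^2) \<Rightarrow> int \<Rightarrow> real \<Rightarrow> real^2 \<Rightarrow> real" where
  "small_ball_prob n v s \<beta> c =
     real (card {x \<in> sign_vecs n s. (\<Sum>i<n. of_int (x i) *\<^sub>R v i) \<in> cball c \<beta>})
     / real (card (sign_vecs n s))"

text \<open>rho^*_beta(V) for the multiset V = {v 0, ..., v (n-1)}.\<close>
definition rho_star :: "nat \<Rightarrow> (nat \<Rightarrow> real^2) \<Rightarrow> int \<Rightarrow> real \<Rightarrow> real" where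
  "rho_star n v s \<beta> = (SUP c. small_ball_prob n v s \<beta> c)"

end

theory Submission
  imports Defs "HOL-Combinatorics.Transposition"
begin

text \<open>Greedily pair up vectors lying more than \<beta> n^6 apart; the hypothesis leaves fewer than
  n - n' points unpaired, so there are more than n'/2 pairs, and more than n'/4 of them differ by
  more than \<beta> in one common coordinate. Projecting to that coordinate gives a one-dimensional
  problem. Condition on the set D of discordant pairs (x_i \<noteq> x_j) and on all other entries:
  swapping the signs inside pairs of D preserves the coordinate sum, and the swap patterns whose
  sum lands in a window of width 2\<beta> form an antichain, so by Sperner only a
  binom d (d div 2) / 2^d = O(1/sqrt d) fraction of each class does, where d = card D.
  A second-moment computation, based on the exchangeability of sign vectors with fixed sum,
  shows that d is of order \<epsilon>^2 times the number of pairs for all but a small fraction of x.\<close>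

hide_const (open) Finite_Cartesian_Product.transpose
hide_fact (open) Finite_Cartesian_Product.transpose_def

lemma binomial_complement_ratio:
  assumes "k < Suc m"
  shows "real (Suc m - k) / real (m choose k) = real (Suc m) / real (Suc m choose k)"
proof -
  have "(Suc m - k) * (Suc m choose k) = Suc m * (m choose k)"
    using binomial_absorb_comp[of "Suc m" k] by simp
  then have "real (Suc m - k) * real (Suc m choose k) = real (Suc m) * real (m choose k)"
    by (metis of_nat_mult)
  moreover have "(m choose k) > 0" "(Suc m choose k) > 0" using assms by simp_all
  ultimately show ?thesis by (subst frac_eq_eq) auto
qed

lemma sum_members_avoiding:
  fixes f :: "'a set \<Rightarrow> real"
  assumes "finite X" "finite F"
  shows "(\<Sum>x\<in>X. \<Sum>A\<in>{A\<in>F. x \<notin> A}. f A) = (\<Sum>A\<in>F. real (card (X - A)) * f A)"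
proof -
  have "(\<Sum>x\<in>X. \<Sum>A\<in>{A\<in>F. x \<notin> A}. f A) = (\<Sum>A\<in>F. \<Sum>x\<in>X. if x \<notin> A then f A else 0)"
    by (subst sum.swap) (simp add: sum.inter_filter assms(2))
  also have "\<dots> = (\<Sum>A\<in>F. \<Sum>x\<in>X - A. f A)"
  proof (rule sum.cong[OF refl])
    fix A
    have "{x\<in>X. x \<notin> A} = X - A" by auto
    then show "(\<Sum>x\<in>X. if x \<notin> A then f A else 0) = (\<Sum>x\<in>X - A. f A)"
      using sum.inter_filter[OF assms(1), of "\<lambda>_. f A" "\<lambda>x. x \<notin> A"] by simp
  qed
  finally show ?thesis by simp
qed

lemma LYM_inequality:
  assumes "finite X" "F \<subseteq> Pow X" "\<forall>A\<in>F. \<forall>B\<in>F. A \<subseteq> B \<longrightarrow> A = B"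
  shows "(\<Sum>A\<in>F. 1 / real (card X choose card A)) \<le> 1"
  using assms
proof (induction "card X" arbitrary: X F)
  case 0
  then have "F \<subseteq> {{}}" by auto
  then show ?case
    by (cases "F = {}") (auto dest: subset_singletonD)
next
  case (Suc m)
  have finF: "finite F" using Suc.prems(1,2) by (meson finite_Pow_iff rev_finite_subset)
  show ?case
  proof (cases "X \<in> F")
    case True
    then have "F = {X}" using Suc.prems(2,3) by blast
    then show ?thesis by simp
  next
    case False
    have cardA: "card A < Suc m" if "A \<in> F" for A
      using that Suc.prems(1,2) Suc.hyps(2) False by (metis PowD psubsetI psubset_card_mono subsetD)
    \<comment> \<open>Double counting: apply the induction hypothesis to the members avoiding x, for each x \<in> X.\<close>
    have IH: "(\<Sum>A\<in>{A\<in>F. x \<notin> A}. 1 / real (m choose card A)) \<le> 1" if "x \<in> X" for x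
    proof -
      have "card (X - {x}) = m" using Suc.hyps(2) that Suc.prems(1) by simp
      moreover have "{A\<in>F. x \<notin> A} \<subseteq> Pow (X - {x})" using Suc.prems(2) by blast
      ultimately show ?thesis using Suc.hyps(1)[of "X - {x}" "{A\<in>F. x \<notin> A}"] Suc.prems(1,3) by simp
    qed
    have "real (Suc m) = (\<Sum>x\<in>X. 1)" using Suc.hyps(2) by simp
    also have "\<dots> \<ge> (\<Sum>x\<in>X. \<Sum>A\<in>{A\<in>F. x \<notin> A}. 1 / real (m choose card A))"
      using IH by (rule sum_mono)
    also have "(\<Sum>x\<in>X. \<Sum>A\<in>{A\<in>F. x \<notin> A}. 1 / real (m choose card A))
        = (\<Sum>A\<in>F. real (card (X - A)) / real (m choose card A))"
      using sum_members_avoiding[OF Suc.prems(1) finF, of "\<lambda>A. 1 / real (m choose card A)"] by simp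
    also have "\<dots> = (\<Sum>A\<in>F. real (Suc m) / real (Suc m choose card A))"
    proof (intro sum.cong refl)
      fix A assume "A \<in> F"
      then have "card (X - A) = Suc m - card A"
        using Suc.prems(1,2) Suc.hyps(2) by (auto simp: card_Diff_subset finite_subset)
      then show "real (card (X - A)) / real (m choose card A) = real (Suc m) / real (Suc m choose card A)"
        using binomial_complement_ratio[OF cardA[OF \<open>A \<in> F\<close>]] by simp
    qed
    also have "\<dots> = real (Suc m) * (\<Sum>A\<in>F. 1 / real (card X choose card A))"
      by (simp add: sum_distrib_left Suc.hyps(2)[symmetric])
    finally show ?thesis by simp
  qed
qed

lemma Sperner:
  assumes "finite X" "F \<subseteq> Pow X" "\<forall>A\<in>F. \<forall>B\<in>F. A \<subseteq> B \<longrightarrow> A = B"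
  shows "card F \<le> card X choose (card X div 2)"
proof -
  have "real (card F) / real (card X choose (card X div 2)) = (\<Sum>A\<in>F. 1 / real (card X choose (card X div 2)))"
    by simp
  also have "\<dots> \<le> (\<Sum>A\<in>F. 1 / real (card X choose card A))"
  proof (rule sum_mono)
    fix A assume "A \<in> F"
    then have "card A \<le> card X" using assms by (meson PowD card_mono subsetD)
    then show "1 / real (card X choose (card X div 2)) \<le> 1 / real (card X choose card A)"
      using binomial_maximum[of "card X" "card A"] by (intro divide_left_mono) auto
  qed
  also have "\<dots> \<le> 1" by (rule LYM_inequality[OF assms])
  finally show ?thesis by (simp add: divide_le_eq)
qed

lemma binomial_Suc_double: "(2 * Suc r) choose Suc r = 2 * ((2 * r + 1) choose r)"
proof -
  have "Suc r * (Suc (2 * r + 1) choose Suc r) = Suc (2 * r + 1) * ((2 * r + 1) choose r)"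
    by (rule Suc_times_binomial)
  then have "Suc r * ((2 * Suc r) choose Suc r) = Suc r * (2 * ((2 * r + 1) choose r))"
    by (simp add: algebra_simps)
  then show ?thesis by (simp only: mult_left_cancel)
qed

lemma central_binomial_even_sq_bound: "(real ((2 * r) choose r) / 4 ^ r)\<^sup>2 * (2 * r + 1) \<le> 1"
proof (induction r)
  case 0 then show ?case by simp
next
  case (Suc r)
  define t where "t = real ((2 * r) choose r) / 4 ^ r"
  have IH: "t\<^sup>2 * (2 * real r + 1) \<le> 1" using Suc t_def by (simp add: add.commute)
  have "(r + 1) * ((2 * r + 1) choose r) = (2 * r + 1) * ((2 * r) choose r)"
    using binomial_absorb_comp[of "2 * r + 1" r] by (simp add: Suc_diff_le)
  then have "((2 * Suc r) choose Suc r) * (r + 1) = ((2 * r) choose r) * (2 * (2 * r + 1))"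
    unfolding binomial_Suc_double by (metis mult.assoc mult.commute)
  then have "real ((2 * Suc r) choose Suc r) * (r + 1) = real ((2 * r) choose r) * (2 * (2 * r + 1))"
    by (metis of_nat_mult)
  then have "real ((2 * Suc r) choose Suc r) = real ((2 * r) choose r) * (2 * (2 * r + 1)) / (r + 1)"
    by (simp add: eq_divide_eq)
  then have step: "real ((2 * Suc r) choose Suc r) / 4 ^ Suc r = t * ((2 * r + 1) / (2 * r + 2))"
    unfolding t_def by (simp add: divide_simps) (simp add: algebra_simps)
  have "(2 * real r + 1) * (2 * real r + 3) \<le> (2 * real r + 2)\<^sup>2"
    by (simp add: power2_eq_square algebra_simps)
  then have ratio: "(2 * real r + 1) * (2 * real r + 3) / (2 * real r + 2)\<^sup>2 \<le> 1"
    by (simp add: divide_le_eq)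
  have "(real ((2 * Suc r) choose Suc r) / 4 ^ Suc r)\<^sup>2 * (2 * Suc r + 1)
      = (t\<^sup>2 * (2 * real r + 1)) * ((2 * real r + 1) * (2 * real r + 3) / (2 * real r + 2)\<^sup>2)"
    unfolding step power2_eq_square by (simp add: field_simps)
  also have "\<dots> \<le> 1 * 1"
    by (rule mult_mono[OF IH ratio]) simp_all
  finally show ?case by simp
qed

lemma central_binomial_sq_bound: "(real (m choose (m div 2)) / 2 ^ m)\<^sup>2 * (m + 1) \<le> 1"
proof -
  have pow4: "(2::real) ^ (2 * r) = 4 ^ r" for r by (simp add: power_mult)
  show ?thesis
  proof (cases "even m")
    case True
    then obtain r where "m = 2 * r" by auto
    then show ?thesis using central_binomial_even_sq_bound[of r] pow4[of r] by (simp add: add.commute)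
  next
    case False
    then obtain r where m: "m = 2 * r + 1" using oddE by blast
    have odd_even: "real (m choose (m div 2)) / 2 ^ m = real ((2 * Suc r) choose Suc r) / 4 ^ Suc r"
      using pow4[of r] unfolding binomial_Suc_double m by simp
    have "(real (m choose (m div 2)) / 2 ^ m)\<^sup>2 * (m + 1)
        \<le> (real ((2 * Suc r) choose Suc r) / 4 ^ Suc r)\<^sup>2 * (2 * Suc r + 1)"
      unfolding odd_even by (rule mult_left_mono) (use m in auto)
    also have "\<dots> \<le> 1" by (rule central_binomial_even_sq_bound)
    finally show ?thesis .
  qed
qed

definition central_binom_prob :: "nat \<Rightarrow> real" where
  "central_binom_prob d = real (d choose (d div 2)) / 2 ^ d"

lemma central_binom_prob_nonneg: "central_binom_prob d \<ge> 0"
  unfolding central_binom_prob_def by simp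

lemma central_binom_prob_le_one: "central_binom_prob d \<le> 1"
  using binomial_le_pow2[of d "d div 2"] unfolding central_binom_prob_def
  by (simp add: divide_le_eq flip: of_nat_le_iff)

lemma central_binom_prob_le_inverse_sqrt:
  assumes "r > 0" "real d \<ge> r"
  shows "central_binom_prob d \<le> 1 / sqrt r"
proof -
  have "(central_binom_prob d)\<^sup>2 * r \<le> (central_binom_prob d)\<^sup>2 * (real d + 1)"
    using assms by (intro mult_left_mono) auto
  also have "\<dots> \<le> 1"
    using central_binomial_sq_bound[of d] unfolding central_binom_prob_def by (simp add: add.commute)
  finally have "(central_binom_prob d)\<^sup>2 \<le> 1 / r" using assms by (simp add: field_simps)
  then have "sqrt ((central_binom_prob d)\<^sup>2) \<le> sqrt (1 / r)" by (rule real_sqrt_le_mono)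
  then show ?thesis using central_binom_prob_nonneg[of d] by (simp add: real_sqrt_divide)
qed


lemma sign_vecs_pm1: "x \<in> sign_vecs n s \<Longrightarrow> k < n \<Longrightarrow> x k = 1 \<or> x k = -1"
  unfolding sign_vecs_def by (auto simp: PiE_iff)

lemma sign_vecs_undefined: "x \<in> sign_vecs n s \<Longrightarrow> n \<le> k \<Longrightarrow> x k = undefined"
  unfolding sign_vecs_def by (auto simp: PiE_iff extensional_def)

lemma sign_vecs_sum: "x \<in> sign_vecs n s \<Longrightarrow> (\<Sum>i<n. x i) = s"
  unfolding sign_vecs_def by auto

lemma sign_vecsI:
  "(\<And>k. k < n \<Longrightarrow> x k = 1 \<or> x k = -1) \<Longrightarrow> (\<And>k. n \<le> k \<Longrightarrow> x k = undefined)
   \<Longrightarrow> (\<Sum>i<n. x i) = s \<Longrightarrow> x \<in> sign_vecs n s"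
  unfolding sign_vecs_def by (auto simp: PiE_iff extensional_def)

lemma finite_sign_vecs: "finite (sign_vecs n s)"
proof (rule finite_subset)
  show "sign_vecs n s \<subseteq> PiE {..<n} (\<lambda>_. {-1, 1})" unfolding sign_vecs_def by auto
  show "finite (PiE {..<n} (\<lambda>_. {-1, 1::int}))" by (rule finite_PiE) auto
qed

definition pair_matching :: "'a set \<Rightarrow> ('a \<times> 'a) set \<Rightarrow> bool" where
  "pair_matching S P \<longleftrightarrow> finite P \<and> (\<forall>p\<in>P. fst p \<in> S \<and> snd p \<in> S \<and> fst p \<noteq> snd p) \<and>
     (\<forall>p\<in>P. \<forall>p'\<in>P. p \<noteq> p' \<longrightarrow> {fst p, snd p} \<inter> {fst p', snd p'} = {})"

definition matched_points :: "('a \<times> 'a) set \<Rightarrow> 'a set" where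
  "matched_points P = fst ` P \<union> snd ` P"

context
  fixes S :: "'a set" and P :: "('a \<times> 'a) set"
  assumes P: "pair_matching S P"
begin

lemma pair_matching_finite: "finite P"
  using P by (simp add: pair_matching_def)

lemma pair_matchingD:
  assumes "p \<in> P" shows "fst p \<in> S" "snd p \<in> S" "fst p \<noteq> snd p"
  using P assms by (simp_all add: pair_matching_def)

lemma pair_matching_unique:
  assumes "p \<in> P" "p' \<in> P" "k = fst p \<or> k = snd p" "k = fst p' \<or> k = snd p'"
  shows "p = p'"
proof (rule ccontr)
  assume "p \<noteq> p'"
  then have "{fst p, snd p} \<inter> {fst p', snd p'} = {}"
    using P assms(1,2) unfolding pair_matching_def by simp
  then show False using assms(3,4) by auto
qed

lemma pair_matching_subset: "Q \<subseteq> P \<Longrightarrow> pair_matching S Q"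
  using P rev_finite_subset unfolding pair_matching_def by (metis subsetD)

lemma matched_points_subset: "T \<subseteq> P \<Longrightarrow> matched_points T \<subseteq> S"
  using pair_matchingD unfolding matched_points_def by blast

lemma sum_matched_points:
  assumes "T \<subseteq> P"
  shows "(\<Sum>k\<in>matched_points T. g k) = (\<Sum>p\<in>T. g (fst p) + g (snd p))"
proof -
  have fin: "finite T" using pair_matching_finite assms finite_subset by blast
  have union: "matched_points T = (\<Union>p\<in>T. {fst p, snd p})" unfolding matched_points_def by auto
  have disj: "\<forall>p\<in>T. \<forall>p'\<in>T. p \<noteq> p' \<longrightarrow> {fst p, snd p} \<inter> {fst p', snd p'} = {}"
    using pair_matching_unique assms by blast
  have "(\<Sum>k\<in>matched_points T. g k) = (\<Sum>p\<in>T. \<Sum>k\<in>{fst p, snd p}. g k)"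
    unfolding union by (rule sum.UNION_disjoint[OF fin]) (use disj in auto)
  also have "\<dots> = (\<Sum>p\<in>T. g (fst p) + g (snd p))"
    using pair_matchingD(3) assms by (intro sum.cong) auto
  finally show ?thesis .
qed

lemma card_matched_points: "card (matched_points P) = 2 * card P"
  using sum_matched_points[of P "\<lambda>_. 1::nat"] by simp

lemma sum_over_matched_points:
  assumes "finite S" "T \<subseteq> P" "\<And>k. k \<in> S \<Longrightarrow> k \<notin> matched_points T \<Longrightarrow> g k = 0"
  shows "sum g S = (\<Sum>k\<in>matched_points T. g k)"
  using assms matched_points_subset by (intro sum.mono_neutral_right) auto

lemma pair_matching_card_le: "finite S \<Longrightarrow> 2 * card P \<le> card S"
  using card_mono[OF _ matched_points_subset[OF subset_refl]] card_matched_points by simp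

lemma pair_in_image_iff:
  assumes "p \<in> P" "A \<subseteq> P"
  shows "fst p \<in> fst ` A \<longleftrightarrow> p \<in> A" "snd p \<in> snd ` A \<longleftrightarrow> p \<in> A"
    and "fst p \<notin> snd ` A" "snd p \<notin> fst ` A"
proof -
  have same: "p' = p" if "p' \<in> A" "fst p = fst p' \<or> fst p = snd p' \<or> snd p = fst p' \<or> snd p = snd p'" for p'
    using pair_matching_unique[OF assms(1), of p'] that assms(2) by blast
  show "fst p \<in> fst ` A \<longleftrightarrow> p \<in> A" "snd p \<in> snd ` A \<longleftrightarrow> p \<in> A"
    using same by force+
  show "fst p \<notin> snd ` A"
  proof
    assume "fst p \<in> snd ` A"
    then obtain p' where "p' \<in> A" "fst p = snd p'" by auto
    then show False using same[of p'] pair_matchingD(3)[OF assms(1)] by auto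
  qed
  show "snd p \<notin> fst ` A"
  proof
    assume "snd p \<in> fst ` A"
    then obtain p' where "p' \<in> A" "snd p = fst p'" by auto
    then show False using same[of p'] pair_matchingD(3)[OF assms(1)] by auto
  qed
qed

lemma pair_in_matched_points_iff:
  assumes "p \<in> P" "A \<subseteq> P"
  shows "fst p \<in> matched_points A \<longleftrightarrow> p \<in> A" "snd p \<in> matched_points A \<longleftrightarrow> p \<in> A"
  using pair_in_image_iff[OF assms] unfolding matched_points_def by auto

end

definition assign_signs :: "('a \<times> 'a) set \<Rightarrow> ('a \<times> 'a) set \<Rightarrow> ('a \<Rightarrow> int) \<Rightarrow> 'a \<Rightarrow> int" where
  "assign_signs D V x k =
     (if k \<in> fst ` V \<union> snd ` (D - V) then 1 else if k \<in> snd ` V \<union> fst ` (D - V) then -1 else x k)"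

lemma assign_signs_outside:
  "V \<subseteq> D \<Longrightarrow> k \<notin> matched_points D \<Longrightarrow> assign_signs D V x k = x k"
  unfolding assign_signs_def matched_points_def by auto

context
  fixes S :: "'a set" and P :: "('a \<times> 'a) set"
  assumes P: "pair_matching S P"
begin

lemma assign_signs_pair:
  assumes "D \<subseteq> P" "V \<subseteq> D" "p \<in> D"
  shows "assign_signs D V x (fst p) = (if p \<in> V then 1 else -1)"
    and "assign_signs D V x (snd p) = (if p \<in> V then -1 else 1)"
proof -
  have "p \<in> P" "V \<subseteq> P" "D - V \<subseteq> P" using assms by auto
  note V = pair_in_image_iff[OF P \<open>p \<in> P\<close> \<open>V \<subseteq> P\<close>]
    and DV = pair_in_image_iff[OF P \<open>p \<in> P\<close> \<open>D - V \<subseteq> P\<close>]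
  show "assign_signs D V x (fst p) = (if p \<in> V then 1 else -1)"
    and "assign_signs D V x (snd p) = (if p \<in> V then -1 else 1)"
    using V DV assms(3) unfolding assign_signs_def by auto
qed

end

definition discordant_pairs :: "('a \<times> 'a) set \<Rightarrow> ('a \<Rightarrow> int) \<Rightarrow> ('a \<times> 'a) set" where
  "discordant_pairs P x = {p\<in>P. x (fst p) \<noteq> x (snd p)}"

definition weighted_sum :: "nat \<Rightarrow> (nat \<Rightarrow> real) \<Rightarrow> (nat \<Rightarrow> int) \<Rightarrow> real" where
  "weighted_sum n w x = (\<Sum>i<n. real_of_int (x i) * w i)"

text \<open>The sign vectors obtained from x by permuting the two entries inside some of its
  discordant pairs.\<close>
definition flip_class :: "nat \<Rightarrow> int \<Rightarrow> (nat \<times> nat) set \<Rightarrow> (nat \<Rightarrow> int) \<Rightarrow> (nat \<Rightarrow> int) set" where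
  "flip_class n s P x = {y \<in> sign_vecs n s. discordant_pairs P y = discordant_pairs P x \<and>
     (\<forall>k<n. k \<notin> matched_points (discordant_pairs P x) \<longrightarrow> y k = x k)}"

definition up_pairs :: "('a \<times> 'a) set \<Rightarrow> ('a \<Rightarrow> int) \<Rightarrow> ('a \<times> 'a) set" where
  "up_pairs P y = {p \<in> discordant_pairs P y. y (fst p) = 1}"

text \<open>The flip classes partition the sign vectors: each class is a fibre of this map.\<close>
definition flip_signature ::
    "nat \<Rightarrow> (nat \<times> nat) set \<Rightarrow> (nat \<Rightarrow> int) \<Rightarrow> (nat \<times> nat) set \<times> (nat \<Rightarrow> int)" where
  "flip_signature n P y =
     (discordant_pairs P y, \<lambda>k. if k < n \<and> k \<notin> matched_points (discordant_pairs P y) then y k else 0)"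

lemma finite_flip_class: "finite (flip_class n s P x)"
  using finite_sign_vecs unfolding flip_class_def by simp

context
  fixes n :: nat and s :: int and P :: "(nat \<times> nat) set" and x :: "nat \<Rightarrow> int"
  assumes P: "pair_matching {..<n} P" and x: "x \<in> sign_vecs n s"
begin

lemma discordant_pair_signs:
  assumes "y \<in> sign_vecs n s" "p \<in> discordant_pairs P y"
  shows "y (fst p) = (if p \<in> up_pairs P y then 1 else -1)"
    and "y (snd p) = (if p \<in> up_pairs P y then -1 else 1)"
proof -
  have "p \<in> P" "y (fst p) \<noteq> y (snd p)" using assms(2) unfolding discordant_pairs_def by auto
  moreover have "y (fst p) = 1 \<or> y (fst p) = -1" "y (snd p) = 1 \<or> y (snd p) = -1"
    using sign_vecs_pm1[OF assms(1)] pair_matchingD[OF P calculation(1)] by auto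
  ultimately show "y (fst p) = (if p \<in> up_pairs P y then 1 else -1)"
    and "y (snd p) = (if p \<in> up_pairs P y then -1 else 1)"
    using assms(2) unfolding up_pairs_def by auto
qed

lemma discordant_pairs_assign_signs:
  assumes V: "V \<subseteq> discordant_pairs P x"
  shows "discordant_pairs P (assign_signs (discordant_pairs P x) V x) = discordant_pairs P x"
proof (intro subset_antisym subsetI)
  define D where "D = discordant_pairs P x"
  have DP: "D \<subseteq> P" unfolding D_def discordant_pairs_def by auto
  {
    fix p assume p: "p \<in> discordant_pairs P (assign_signs D V x)"
    then have pP: "p \<in> P" and ne: "assign_signs D V x (fst p) \<noteq> assign_signs D V x (snd p)"
      unfolding discordant_pairs_def by auto
    show "p \<in> D"
    proof (rule ccontr)
      assume "p \<notin> D"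
      then show False
        using ne assign_signs_outside[OF V[folded D_def]] pair_in_matched_points_iff[OF P pP DP] pP
        unfolding D_def discordant_pairs_def by auto
    qed
  }
  fix p assume "p \<in> D"
  then show "p \<in> discordant_pairs P (assign_signs D V x)"
    using assign_signs_pair[OF P DP V[folded D_def]] DP unfolding discordant_pairs_def by auto
qed

lemma assign_signs_in_flip_class:
  assumes V: "V \<subseteq> discordant_pairs P x"
  shows "assign_signs (discordant_pairs P x) V x \<in> flip_class n s P x"
proof -
  define D where "D = discordant_pairs P x"
  define y where "y = assign_signs D V x"
  have DP: "D \<subseteq> P" unfolding D_def discordant_pairs_def by auto
  have off_D: "y k = x k" if "k \<notin> matched_points D" for k
    using assign_signs_outside[OF V[folded D_def] that] unfolding y_def .
  have pm1: "y k = 1 \<or> y k = -1" if "k < n" for k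
    using sign_vecs_pm1[OF x that] unfolding y_def assign_signs_def by auto
  have undef: "y k = undefined" if "n \<le> k" for k
  proof -
    have "k \<notin> matched_points D" using matched_points_subset[OF P DP] that by auto
    then show ?thesis using off_D sign_vecs_undefined[OF x that] by simp
  qed
  \<comment> \<open>On every pair of D both x and y take the values 1 and -1 once, so the sum is unchanged.\<close>
  have "(\<Sum>i<n. y i) - (\<Sum>i<n. x i) = (\<Sum>i\<in>matched_points D. y i - x i)"
    using off_D by (simp add: sum_subtractf[symmetric] sum_over_matched_points[OF P _ DP])
  also have "\<dots> = (\<Sum>p\<in>D. (y (fst p) - x (fst p)) + (y (snd p) - x (snd p)))"
    by (rule sum_matched_points[OF P DP])
  also have "\<dots> = 0"
    using assign_signs_pair[OF P DP V[folded D_def]] discordant_pair_signs[OF x]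
    unfolding y_def D_def by (intro sum.neutral) auto
  finally have "y \<in> sign_vecs n s"
    using sign_vecs_sum[OF x] by (intro sign_vecsI pm1 undef) simp_all
  then show ?thesis
    using off_D discordant_pairs_assign_signs[OF V] unfolding flip_class_def y_def D_def by auto
qed

lemma card_flip_class_ge: "2 ^ card (discordant_pairs P x) \<le> card (flip_class n s P x)"
proof -
  define D where "D = discordant_pairs P x"
  have DP: "D \<subseteq> P" unfolding D_def discordant_pairs_def by auto
  have "finite D" using pair_matching_finite[OF P] DP finite_subset by blast
  have "inj_on (\<lambda>V. assign_signs D V x) (Pow D)"
  proof (rule inj_onI)
    fix V V' assume V: "V \<in> Pow D" "V' \<in> Pow D" and eq: "assign_signs D V x = assign_signs D V' x"
    have "assign_signs D W x (fst p) = 1 \<longleftrightarrow> p \<in> W" if "W \<subseteq> D" "p \<in> D" for W p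
      using assign_signs_pair[OF P DP that] by simp
    from this[of V] this[of V'] show "V = V'" using V eq by auto
  qed
  then have "2 ^ card D = card ((\<lambda>V. assign_signs D V x) ` Pow D)"
    using \<open>finite D\<close> by (simp add: card_image card_Pow)
  also have "\<dots> \<le> card (flip_class n s P x)"
    using assign_signs_in_flip_class finite_flip_class unfolding D_def by (intro card_mono) auto
  finally show ?thesis unfolding D_def .
qed

lemma flip_class_memD:
  assumes "y \<in> flip_class n s P x"
  shows "y \<in> sign_vecs n s" "discordant_pairs P y = discordant_pairs P x"
    and "\<And>k. k < n \<Longrightarrow> k \<notin> matched_points (discordant_pairs P x) \<Longrightarrow> y k = x k"
  using assms unfolding flip_class_def by auto

lemma flip_class_eq_fibre:
  "{y \<in> sign_vecs n s. flip_signature n P y = flip_signature n P x} = flip_class n s P x"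
proof (intro subset_antisym subsetI)
  fix y assume "y \<in> {y \<in> sign_vecs n s. flip_signature n P y = flip_signature n P x}"
  then have "y \<in> sign_vecs n s" and sig: "flip_signature n P y = flip_signature n P x" by auto
  moreover have "y k = x k" if "k < n" "k \<notin> matched_points (discordant_pairs P x)" for k
    using sig that unfolding flip_signature_def by (auto dest: fun_cong[of _ _ k])
  ultimately show "y \<in> flip_class n s P x" using sig unfolding flip_class_def flip_signature_def by auto
next
  fix y assume "y \<in> flip_class n s P x"
  then show "y \<in> {y \<in> sign_vecs n s. flip_signature n P y = flip_signature n P x}"
    unfolding flip_class_def flip_signature_def by auto
qed

lemma flip_class_eq_iff_up_pairs:
  assumes "y \<in> flip_class n s P x" "y' \<in> flip_class n s P x" "p \<in> discordant_pairs P x"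
  shows "y (fst p) = y' (fst p) \<and> y (snd p) = y' (snd p) \<longleftrightarrow> (p \<in> up_pairs P y \<longleftrightarrow> p \<in> up_pairs P y')"
  using discordant_pair_signs[OF flip_class_memD(1)[OF assms(1)], of p]
    discordant_pair_signs[OF flip_class_memD(1)[OF assms(2)], of p]
    flip_class_memD(2)[OF assms(1)] flip_class_memD(2)[OF assms(2)] assms(3) by auto

lemma inj_on_up_pairs_flip_class: "inj_on (up_pairs P) (flip_class n s P x)"
proof (rule inj_onI, rule ext)
  fix y y' k assume y: "y \<in> flip_class n s P x" and y': "y' \<in> flip_class n s P x"
    and eq: "up_pairs P y = up_pairs P y'"
  show "y k = y' k"
  proof (cases "k < n \<and> k \<in> matched_points (discordant_pairs P x)")
    case True
    then obtain p where "p \<in> discordant_pairs P x" "k = fst p \<or> k = snd p"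
      unfolding matched_points_def by auto
    then show ?thesis using flip_class_eq_iff_up_pairs[OF y y' \<open>p \<in> discordant_pairs P x\<close>] eq by auto
  next
    case False
    then show ?thesis
      using flip_class_memD[OF y] flip_class_memD[OF y'] sign_vecs_undefined by (metis not_le)
  qed
qed

lemma weighted_sum_flip_class_diff:
  assumes y: "y \<in> flip_class n s P x" and y': "y' \<in> flip_class n s P x"
    and sub: "up_pairs P y \<subseteq> up_pairs P y'"
  shows "weighted_sum n w y' - weighted_sum n w y = (\<Sum>p\<in>up_pairs P y' - up_pairs P y. 2 * (w (fst p) - w (snd p)))"
proof -
  define D where "D = discordant_pairs P x"
  define T where "T = up_pairs P y' - up_pairs P y"
  have DP: "D \<subseteq> P" unfolding D_def discordant_pairs_def by auto
  have TD: "T \<subseteq> D" using flip_class_memD(2)[OF y'] unfolding T_def up_pairs_def D_def by auto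
  have TP: "T \<subseteq> P" using TD DP by auto
  have "weighted_sum n w y' - weighted_sum n w y = (\<Sum>k<n. (real_of_int (y' k) - real_of_int (y k)) * w k)"
    unfolding weighted_sum_def by (simp add: sum_subtractf algebra_simps)
  also have "\<dots> = (\<Sum>k\<in>matched_points T. (real_of_int (y' k) - real_of_int (y k)) * w k)"
  proof (rule sum_over_matched_points[OF P _ TP])
    fix k assume k: "k \<in> {..<n}" "k \<notin> matched_points T"
    have "y k = y' k"
    proof (cases "k \<in> matched_points D")
      case True
      then obtain p where p: "p \<in> D" "k = fst p \<or> k = snd p" unfolding matched_points_def by auto
      then have "p \<notin> T" using k(2) unfolding matched_points_def by force
      then have "p \<in> up_pairs P y \<longleftrightarrow> p \<in> up_pairs P y'" using sub unfolding T_def by blast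
      then show ?thesis using flip_class_eq_iff_up_pairs[OF y y' p(1)[unfolded D_def]] p(2) by auto
    next
      case False
      then show ?thesis
        using flip_class_memD(3)[OF y, of k] flip_class_memD(3)[OF y', of k] k(1) unfolding D_def by simp
    qed
    then show "(real_of_int (y' k) - real_of_int (y k)) * w k = 0" by simp
  qed simp
  also have "\<dots> = (\<Sum>p\<in>T. (real_of_int (y' (fst p)) - real_of_int (y (fst p))) * w (fst p)
                      + (real_of_int (y' (snd p)) - real_of_int (y (snd p))) * w (snd p))"
    by (rule sum_matched_points[OF P TP])
  also have "\<dots> = (\<Sum>p\<in>T. 2 * (w (fst p) - w (snd p)))"
  proof (rule sum.cong[OF refl])
    fix p assume "p \<in> T"
    then have "p \<in> discordant_pairs P y" "p \<in> discordant_pairs P y'" "p \<in> up_pairs P y'" "p \<notin> up_pairs P y"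
      using TD flip_class_memD(2)[OF y] flip_class_memD(2)[OF y'] unfolding T_def D_def by auto
    then show "(real_of_int (y' (fst p)) - real_of_int (y (fst p))) * w (fst p)
        + (real_of_int (y' (snd p)) - real_of_int (y (snd p))) * w (snd p) = 2 * (w (fst p) - w (snd p))"
      using discordant_pair_signs[OF flip_class_memD(1)[OF y]] discordant_pair_signs[OF flip_class_memD(1)[OF y']]
      by (simp add: algebra_simps)
  qed
  finally show ?thesis unfolding T_def .
qed

lemma up_pairs_window_eq:
  assumes gap: "\<forall>p\<in>P. w (fst p) - w (snd p) > \<beta>" and "\<beta> \<ge> 0"
    and y: "y \<in> flip_class n s P x" "\<bar>weighted_sum n w y - t\<bar> \<le> \<beta>"
    and y': "y' \<in> flip_class n s P x" "\<bar>weighted_sum n w y' - t\<bar> \<le> \<beta>"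
    and sub: "up_pairs P y \<subseteq> up_pairs P y'"
  shows "up_pairs P y = up_pairs P y'"
proof (rule ccontr)
  assume "up_pairs P y \<noteq> up_pairs P y'"
  then obtain p0 where p0: "p0 \<in> up_pairs P y' - up_pairs P y" using sub by blast
  have "up_pairs P y' - up_pairs P y \<subseteq> P" unfolding up_pairs_def discordant_pairs_def by auto
  moreover have "finite (up_pairs P y' - up_pairs P y)"
    using pair_matching_finite[OF P] calculation finite_subset by blast
  ultimately have "2 * (w (fst p0) - w (snd p0)) \<le> (\<Sum>p\<in>up_pairs P y' - up_pairs P y. 2 * (w (fst p) - w (snd p)))"
    using gap \<open>\<beta> \<ge> 0\<close> by (intro member_le_sum[OF p0]) force+
  also have "\<dots> = weighted_sum n w y' - weighted_sum n w y"
    using weighted_sum_flip_class_diff[OF y(1) y'(1) sub] by simp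
  finally have "2 * (w (fst p0) - w (snd p0)) \<le> weighted_sum n w y' - weighted_sum n w y" .
  moreover have "w (fst p0) - w (snd p0) > \<beta>"
    using gap p0 \<open>up_pairs P y' - up_pairs P y \<subseteq> P\<close> by auto
  moreover have "weighted_sum n w y' - t \<le> \<beta>" "t - weighted_sum n w y \<le> \<beta>"
    using y y' by (auto simp: abs_le_iff)
  ultimately show False by (smt (verit))
qed

lemma card_flip_class_window_le:
  assumes gap: "\<forall>p\<in>P. w (fst p) - w (snd p) > \<beta>" and "\<beta> \<ge> 0"
  shows "card {y \<in> flip_class n s P x. \<bar>weighted_sum n w y - t\<bar> \<le> \<beta>}
           \<le> card (discordant_pairs P x) choose (card (discordant_pairs P x) div 2)"
proof -
  define D where "D = discordant_pairs P x"
  define G where "G = {y \<in> flip_class n s P x. \<bar>weighted_sum n w y - t\<bar> \<le> \<beta>}"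
  have finD: "finite D"
    using pair_matching_finite[OF P] finite_subset unfolding D_def discordant_pairs_def by auto
  have up_D: "up_pairs P y \<subseteq> D" if "y \<in> G" for y
    using that flip_class_memD(2) unfolding G_def up_pairs_def D_def by auto
  \<comment> \<open>Two window members with nested up-sets differ by more than 2\<beta>, so the up-sets form an antichain.\<close>
  have "\<forall>A\<in>up_pairs P ` G. \<forall>B\<in>up_pairs P ` G. A \<subseteq> B \<longrightarrow> A = B"
    using up_pairs_window_eq[OF gap \<open>\<beta> \<ge> 0\<close>] unfolding G_def by blast
  moreover have "up_pairs P ` G \<subseteq> Pow D" using up_D by blast
  ultimately have "card (up_pairs P ` G) \<le> card D choose (card D div 2)"
    using Sperner[OF finD] by blast
  moreover have "inj_on (up_pairs P) G"
    using inj_on_up_pairs_flip_class by (rule inj_on_subset) (auto simp: G_def)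
  ultimately show ?thesis unfolding G_def D_def by (simp add: card_image)
qed

end

context
  fixes n :: nat and s :: int and P :: "(nat \<times> nat) set" and w :: "nat \<Rightarrow> real" and \<beta> t :: real
  assumes P: "pair_matching {..<n} P" and gap: "\<forall>p\<in>P. w (fst p) - w (snd p) > \<beta>" and "\<beta> \<ge> 0"
begin

lemma card_flip_class_window_le_sum:
  assumes x: "x \<in> sign_vecs n s"
  shows "real (card {y \<in> flip_class n s P x. \<bar>weighted_sum n w y - t\<bar> \<le> \<beta>})
           \<le> (\<Sum>y\<in>flip_class n s P x. central_binom_prob (card (discordant_pairs P y)))"
proof -
  define d where "d = card (discordant_pairs P x)"
  have "real (card {y \<in> flip_class n s P x. \<bar>weighted_sum n w y - t\<bar> \<le> \<beta>}) \<le> real (d choose (d div 2))"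
    using card_flip_class_window_le[OF P x gap \<open>\<beta> \<ge> 0\<close>] unfolding d_def of_nat_le_iff .
  also have "\<dots> = 2 ^ d * central_binom_prob d" unfolding central_binom_prob_def by simp
  also have "\<dots> \<le> real (card (flip_class n s P x)) * central_binom_prob d"
    using card_flip_class_ge[OF P x] central_binom_prob_nonneg unfolding d_def
    by (intro mult_right_mono) (simp_all flip: of_nat_le_iff)
  also have "\<dots> = (\<Sum>y\<in>flip_class n s P x. central_binom_prob (card (discordant_pairs P y)))"
    using flip_class_memD(2)[OF P x] unfolding d_def by simp
  finally show ?thesis .
qed

lemma card_window_le_sum_central_binom_prob:
  "real (card {y \<in> sign_vecs n s. \<bar>weighted_sum n w y - t\<bar> \<le> \<beta>})
     \<le> (\<Sum>y\<in>sign_vecs n s. central_binom_prob (card (discordant_pairs P y)))"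
proof -
  define \<Omega> where "\<Omega> = sign_vecs n s"
  define g :: "(nat \<Rightarrow> int) \<Rightarrow> real" where "g y = of_bool (\<bar>weighted_sum n w y - t\<bar> \<le> \<beta>)" for y
  have fin: "finite \<Omega>" unfolding \<Omega>_def by (rule finite_sign_vecs)
  have "real (card {y \<in> \<Omega>. \<bar>weighted_sum n w y - t\<bar> \<le> \<beta>}) = (\<Sum>y\<in>\<Omega>. g y)"
    unfolding g_def using fin by (simp add: Int_def)
  also have "\<dots> = (\<Sum>\<sigma>\<in>flip_signature n P ` \<Omega>. \<Sum>y\<in>{y\<in>\<Omega>. flip_signature n P y = \<sigma>}. g y)"
    by (rule sum.image_gen[OF fin])
  also have "\<dots> \<le> (\<Sum>\<sigma>\<in>flip_signature n P ` \<Omega>. \<Sum>y\<in>{y\<in>\<Omega>. flip_signature n P y = \<sigma>}.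
                     central_binom_prob (card (discordant_pairs P y)))"
  proof (rule sum_mono)
    fix \<sigma> assume "\<sigma> \<in> flip_signature n P ` \<Omega>"
    then obtain x where x: "x \<in> sign_vecs n s" and \<sigma>: "\<sigma> = flip_signature n P x" unfolding \<Omega>_def by auto
    have "(\<Sum>y\<in>flip_class n s P x. g y) = real (card {y \<in> flip_class n s P x. \<bar>weighted_sum n w y - t\<bar> \<le> \<beta>})"
      unfolding g_def using finite_flip_class by (simp add: Int_def)
    then show "(\<Sum>y\<in>{y\<in>\<Omega>. flip_signature n P y = \<sigma>}. g y)
        \<le> (\<Sum>y\<in>{y\<in>\<Omega>. flip_signature n P y = \<sigma>}. central_binom_prob (card (discordant_pairs P y)))"
      using card_flip_class_window_le_sum[OF x] unfolding \<sigma> \<Omega>_def flip_class_eq_fibre[OF P x] by simp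
  qed
  also have "\<dots> = (\<Sum>y\<in>\<Omega>. central_binom_prob (card (discordant_pairs P y)))"
    by (rule sum.image_gen[OF fin, symmetric])
  finally show ?thesis unfolding \<Omega>_def .
qed

end


lemma sign_vecs_transpose:
  assumes "a < n" "b < n" "x \<in> sign_vecs n s"
  shows "x \<circ> transpose a b \<in> sign_vecs n s"
proof (rule sign_vecsI)
  fix k assume "k < n"
  then show "(x \<circ> transpose a b) k = 1 \<or> (x \<circ> transpose a b) k = -1"
    using sign_vecs_pm1[OF assms(3)] assms(1,2) by (simp add: transpose_def)
next
  fix k assume "n \<le> k"
  then show "(x \<circ> transpose a b) k = undefined"
    using sign_vecs_undefined[OF assms(3)] assms(1,2) by (simp add: transpose_def)
next
  have "bij_betw (transpose a b) {..<n} {..<n}"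
    using assms(1,2) by (intro bij_betw_byWitness[where f' = "transpose a b"]) (auto simp: transpose_def)
  then show "(\<Sum>i<n. (x \<circ> transpose a b) i) = s"
    using sum.reindex_bij_betw[of "transpose a b" "{..<n}" "{..<n}" x] sign_vecs_sum[OF assms(3)] by simp
qed

lemma card_sign_vecs_transpose:
  assumes "a < n" "b < n"
  shows "card {x \<in> sign_vecs n s. Q (x \<circ> transpose a b)} = card {x \<in> sign_vecs n s. Q x}"
  by (rule bij_betw_same_card[where f = "\<lambda>x. x \<circ> transpose a b"],
      rule bij_betw_byWitness[where f' = "\<lambda>x. x \<circ> transpose a b"])
     (auto simp: comp_assoc sign_vecs_transpose[OF assms])

definition disagree_count :: "nat \<Rightarrow> int \<Rightarrow> nat \<Rightarrow> nat \<Rightarrow> nat" where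
  "disagree_count n s i j = card {x \<in> sign_vecs n s. x i \<noteq> x j}"

definition disagree_count2 :: "nat \<Rightarrow> int \<Rightarrow> nat \<Rightarrow> nat \<Rightarrow> nat \<Rightarrow> nat \<Rightarrow> nat" where
  "disagree_count2 n s i j k l = card {x \<in> sign_vecs n s. x i \<noteq> x j \<and> x k \<noteq> x l}"

lemma disagree_count_transpose:
  "a < n \<Longrightarrow> b < n \<Longrightarrow>
     disagree_count n s i j = disagree_count n s (transpose a b i) (transpose a b j)"
  unfolding disagree_count_def using card_sign_vecs_transpose[of a n b s "\<lambda>x. x i \<noteq> x j"] by simp

lemma disagree_count2_transpose:
  "a < n \<Longrightarrow> b < n \<Longrightarrow> disagree_count2 n s i j k l
     = disagree_count2 n s (transpose a b i) (transpose a b j) (transpose a b k) (transpose a b l)"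
  unfolding disagree_count2_def using card_sign_vecs_transpose[of a n b s "\<lambda>x. x i \<noteq> x j \<and> x k \<noteq> x l"]
  by simp

lemma disagree_count_normalize:
  assumes "i < n" "j < n" "i \<noteq> j"
  shows "disagree_count n s i j = disagree_count n s 0 1"
proof -
  define j' where "j' = transpose 0 i j"
  have j': "j' \<noteq> 0" "j' < n" unfolding j'_def using assms by (auto simp: transpose_def)
  have "disagree_count n s i j = disagree_count n s 0 j'"
    using disagree_count_transpose[of 0 n i s i j] assms unfolding j'_def by simp
  also have "\<dots> = disagree_count n s 0 1"
    using disagree_count_transpose[of 1 n j' s 0 j'] j' by (simp add: transpose_def)
  finally show ?thesis .
qed

lemma disagree_count2_normalize:
  assumes "i < n" "j < n" "k < n" "l < n" "distinct [i, j, k, l]"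
  shows "disagree_count2 n s i j k l = disagree_count2 n s 0 1 2 3"
proof -
  have "card {i, j, k, l} = 4" "{i, j, k, l} \<subseteq> {..<n}" using assms by auto
  then have n4: "4 \<le> n" by (metis card_lessThan card_mono finite_lessThan)
  define j1 k1 l1 where "j1 = transpose 0 i j" "k1 = transpose 0 i k" "l1 = transpose 0 i l"
  have s1: "disagree_count2 n s i j k l = disagree_count2 n s 0 j1 k1 l1"
    using disagree_count2_transpose[of 0 n i s i j k l] assms unfolding j1_k1_l1_def by simp
  have d1: "j1 < n" "k1 < n" "l1 < n" "distinct [0, j1, k1, l1]"
    unfolding j1_k1_l1_def using assms by (auto simp: transpose_def)
  define k2 l2 where "k2 = transpose 1 j1 k1" "l2 = transpose 1 j1 l1"
  have s2: "disagree_count2 n s 0 j1 k1 l1 = disagree_count2 n s 0 1 k2 l2"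
    using disagree_count2_transpose[of 1 n j1 s 0 j1 k1 l1] d1 n4 unfolding k2_l2_def by (simp add: transpose_def)
  have d2: "k2 < n" "l2 < n" "distinct [0, 1, k2, l2]"
    unfolding k2_l2_def using d1 n4 by (auto simp: transpose_def)
  define l3 where "l3 = transpose 2 k2 l2"
  have s3: "disagree_count2 n s 0 1 k2 l2 = disagree_count2 n s 0 1 2 l3"
    using disagree_count2_transpose[of 2 n k2 s 0 1 k2 l2] d2 n4 unfolding l3_def by (simp add: transpose_def)
  have d3: "l3 < n" "distinct [0, 1, 2, l3]"
    unfolding l3_def using d2 n4 by (auto simp: transpose_def)
  have s4: "disagree_count2 n s 0 1 2 l3 = disagree_count2 n s 0 1 2 3"
    using disagree_count2_transpose[of 3 n l3 s 0 1 2 l3] d3 n4 by (simp add: transpose_def)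
  show ?thesis using s1 s2 s3 s4 by simp
qed

abbreviation disagree :: "(nat \<Rightarrow> int) \<Rightarrow> nat \<Rightarrow> nat \<Rightarrow> real" where
  "disagree x i j \<equiv> of_bool (x i \<noteq> x j)"

lemma sum_of_bool_card: "finite A \<Longrightarrow> (\<Sum>x\<in>A. (of_bool (Q x) :: real)) = real (card {x\<in>A. Q x})"
  by (simp add: Int_def)

lemma card_sign_vec_ones:
  assumes x: "x \<in> sign_vecs n s"
  shows "real (card {k\<in>{..<n}. x k = 1}) = (real n + real_of_int s) / 2"
    and "real (card {k\<in>{..<n}. x k = -1}) = (real n - real_of_int s) / 2"
proof -
  define A where "A = {k\<in>{..<n}. x k = 1}"
  define B where "B = {k\<in>{..<n}. x k = -1}"
  have AB: "A \<union> B = {..<n}" using sign_vecs_pm1[OF x] unfolding A_def B_def by auto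
  have dj: "A \<inter> B = {}" and fin: "finite A" "finite B" unfolding A_def B_def by auto
  have "card A + card B = n" using card_Un_disjoint[OF fin dj] AB by simp
  then have sum: "real (card A) + real (card B) = real n" by (simp flip: of_nat_add)
  have "(\<Sum>k<n. x k) = (\<Sum>k\<in>A. x k) + (\<Sum>k\<in>B. x k)"
    unfolding AB[symmetric] by (rule sum.union_disjoint[OF fin dj])
  also have "\<dots> = int (card A) - int (card B)" unfolding A_def B_def by simp
  finally have "real (card A) - real (card B) = real_of_int s"
    using sign_vecs_sum[OF x] by (metis of_int_diff of_int_of_nat_eq)
  with sum show "real (card A) = (real n + real_of_int s) / 2" "real (card B) = (real n - real_of_int s) / 2"
    by (simp_all add: field_simps)
qed

lemma sum_ordered_pairs_disagree:
  assumes T: "finite T" and v: "\<forall>k\<in>T. x k = 1 \<or> x k = -1"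
  shows "(\<Sum>k\<in>T. \<Sum>l\<in>T-{k}. disagree x k l) = 2 * real (card {k\<in>T. x k = 1}) * real (card {k\<in>T. x k = -1})"
proof -
  define A where "A = {k\<in>T. x k = 1}"
  define B where "B = {k\<in>T. x k = -1}"
  have inner: "(\<Sum>l\<in>T-{k}. disagree x k l) = (if x k = 1 then real (card B) else real (card A))" if k: "k \<in> T" for k
  proof -
    have "(\<Sum>l\<in>T-{k}. disagree x k l) = real (card {l\<in>T-{k}. x k \<noteq> x l})" by (intro sum_of_bool_card) (simp add: T)
    also have "{l\<in>T-{k}. x k \<noteq> x l} = (if x k = 1 then B else A)"
    proof (cases "x k = 1")
      case True
      have "{l\<in>T-{k}. x k \<noteq> x l} = B"
      proof
        show "{l\<in>T-{k}. x k \<noteq> x l} \<subseteq> B" unfolding B_def using v True by fastforce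
        show "B \<subseteq> {l\<in>T-{k}. x k \<noteq> x l}" unfolding B_def using True by fastforce
      qed
      then show ?thesis using True by simp
    next
      case False
      then have xk: "x k = -1" using v k by blast
      have "{l\<in>T-{k}. x k \<noteq> x l} = A"
      proof
        show "{l\<in>T-{k}. x k \<noteq> x l} \<subseteq> A" unfolding A_def using v xk by fastforce
        show "A \<subseteq> {l\<in>T-{k}. x k \<noteq> x l}" unfolding A_def using xk by fastforce
      qed
      then show ?thesis using False by simp
    qed
    finally show ?thesis by simp
  qed
  have "(\<Sum>k\<in>T. \<Sum>l\<in>T-{k}. disagree x k l) = (\<Sum>k\<in>T. if x k = 1 then real (card B) else real (card A))"
    using inner by (rule sum.cong[OF refl])
  also have "\<dots> = real (card (T \<inter> {k. x k = 1})) * real (card B) + real (card (T \<inter> - {k. x k = 1})) * real (card A)"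
    using T by (simp add: sum.If_cases)
  also have "T \<inter> {k. x k = 1} = A" unfolding A_def by auto
  also have "T \<inter> - {k. x k = 1} = B" unfolding B_def using v by auto
  finally show ?thesis unfolding A_def B_def by (simp add: algebra_simps)
qed

lemma sum_ordered_pairs_disagree_sign_vec:
  assumes x: "x \<in> sign_vecs n s"
  shows "(\<Sum>i<n. \<Sum>j\<in>{..<n}-{i}. disagree x i j) = 2 * ((real n + real_of_int s) / 2) * ((real n - real_of_int s) / 2)"
proof -
  have "(\<Sum>i<n. \<Sum>j\<in>{..<n}-{i}. disagree x i j) = 2 * real (card {k\<in>{..<n}. x k = 1}) * real (card {k\<in>{..<n}. x k = -1})"
    by (rule sum_ordered_pairs_disagree) (use sign_vecs_pm1[OF x] in auto)
  then show ?thesis by (simp only: card_sign_vec_ones[OF x])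
qed

lemma disagree_count_eq:
  "real n * (real n - 1) * real (disagree_count n s 0 1) =
     real (card (sign_vecs n s)) * (2 * ((real n + real_of_int s) / 2) * ((real n - real_of_int s) / 2))"
proof -
  define \<Omega> where "\<Omega> = sign_vecs n s"
  have fin: "finite \<Omega>" unfolding \<Omega>_def by (rule finite_sign_vecs)
  have "real (card \<Omega>) * (2 * ((real n + real_of_int s) / 2) * ((real n - real_of_int s) / 2))
      = (\<Sum>x\<in>\<Omega>. \<Sum>i<n. \<Sum>j\<in>{..<n}-{i}. disagree x i j)"
  proof -
    have "(\<Sum>x\<in>\<Omega>. \<Sum>i<n. \<Sum>j\<in>{..<n}-{i}. disagree x i j) = (\<Sum>x\<in>\<Omega>. 2 * ((real n + real_of_int s) / 2) * ((real n - real_of_int s) / 2))"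
      by (rule sum.cong[OF refl], rule sum_ordered_pairs_disagree_sign_vec, simp add: \<Omega>_def)
    then show ?thesis by simp
  qed
  also have "\<dots> = (\<Sum>i<n. \<Sum>x\<in>\<Omega>. \<Sum>j\<in>{..<n}-{i}. disagree x i j)" by (rule sum.swap)
  also have "\<dots> = (\<Sum>i<n. \<Sum>j\<in>{..<n}-{i}. \<Sum>x\<in>\<Omega>. disagree x i j)"
    by (rule sum.cong[OF refl], rule sum.swap)
  also have "\<dots> = (\<Sum>i<n. \<Sum>j\<in>{..<n}-{i}. real (disagree_count n s 0 1))"
  proof (intro sum.cong refl)
    fix i j assume i: "i \<in> {..<n}" and j: "j \<in> {..<n}-{i}"
    have "(\<Sum>x\<in>\<Omega>. disagree x i j) = real (disagree_count n s i j)" unfolding disagree_count_def \<Omega>_def by (rule sum_of_bool_card[OF finite_sign_vecs])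
    also have "disagree_count n s i j = disagree_count n s 0 1" by (rule disagree_count_normalize) (use i j in auto)
    finally show "(\<Sum>x\<in>\<Omega>. disagree x i j) = real (disagree_count n s 0 1)" .
  qed
  also have "\<dots> = real n * (real n - 1) * real (disagree_count n s 0 1)"
  proof -
    have "(\<Sum>j\<in>{..<n}-{i}. real (disagree_count n s 0 1)) = (real n - 1) * real (disagree_count n s 0 1)" if "i \<in> {..<n}" for i
      using that by simp
    then show ?thesis by simp
  qed
  finally show ?thesis unfolding \<Omega>_def by simp
qed

lemma real_card_Diff_singleton: "finite S \<Longrightarrow> m \<in> S \<Longrightarrow> real (card (S - {m})) = real (card S) - 1"
proof -
  assume "finite S" "m \<in> S"
  then have "card S \<ge> 1" by (metis One_nat_def Suc_leI card_gt_0_iff empty_iff)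
  then show ?thesis using card_Diff_singleton[OF \<open>m \<in> S\<close>] by simp
qed

lemma card_ones_remove_disagreeing_pair:
  assumes x: "x \<in> sign_vecs n s" and ij: "i < n" "j < n" "x i \<noteq> x j"
  shows "real (card {k\<in>{..<n}-{i,j}. x k = 1}) = real (card {k\<in>{..<n}. x k = 1}) - 1"
    and "real (card {k\<in>{..<n}-{i,j}. x k = -1}) = real (card {k\<in>{..<n}. x k = -1}) - 1"
proof -
  have vi: "x i = 1 \<or> x i = -1" and vj: "x j = 1 \<or> x j = -1" using sign_vecs_pm1[OF x] ij by auto
  have "real (card {k\<in>{..<n}-{i,j}. x k = 1}) = real (card {k\<in>{..<n}. x k = 1}) - 1 \<and>
        real (card {k\<in>{..<n}-{i,j}. x k = -1}) = real (card {k\<in>{..<n}. x k = -1}) - 1"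
  proof (cases "x i = 1")
    case True
    then have xj: "x j = -1" using vj ij by auto
    have e1: "{k\<in>{..<n}-{i,j}. x k = 1} = {k\<in>{..<n}. x k = 1} - {i}" using True xj by auto
    have e2: "{k\<in>{..<n}-{i,j}. x k = -1} = {k\<in>{..<n}. x k = -1} - {j}" using True xj by auto
    show ?thesis unfolding e1 e2 by (intro conjI real_card_Diff_singleton) (use ij True xj in auto)
  next
    case False
    then have xi: "x i = -1" and xj: "x j = 1" using vi vj ij by auto
    have e1: "{k\<in>{..<n}-{i,j}. x k = 1} = {k\<in>{..<n}. x k = 1} - {j}" using xi xj by auto
    have e2: "{k\<in>{..<n}-{i,j}. x k = -1} = {k\<in>{..<n}. x k = -1} - {i}" using xi xj by auto
    show ?thesis unfolding e1 e2 by (intro conjI real_card_Diff_singleton) (use ij xi xj in auto)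
  qed
  then show "real (card {k\<in>{..<n}-{i,j}. x k = 1}) = real (card {k\<in>{..<n}. x k = 1}) - 1"
    and "real (card {k\<in>{..<n}-{i,j}. x k = -1}) = real (card {k\<in>{..<n}. x k = -1}) - 1" by auto
qed

lemma sum_ordered_quadruples_disagree:
  assumes x: "x \<in> sign_vecs n s"
  shows "(\<Sum>i<n. \<Sum>j\<in>{..<n}-{i}. \<Sum>k\<in>{..<n}-{i,j}. \<Sum>l\<in>{..<n}-{i,j}-{k}. disagree x i j * disagree x k l)
       = (2 * ((real n + real_of_int s) / 2) * ((real n - real_of_int s) / 2)) *
         (2 * ((real n + real_of_int s) / 2 - 1) * ((real n - real_of_int s) / 2 - 1))"
proof -
  define c where "c = 2 * ((real n + real_of_int s) / 2 - 1) * ((real n - real_of_int s) / 2 - 1)"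
  have inner: "(\<Sum>k\<in>{..<n}-{i,j}. \<Sum>l\<in>{..<n}-{i,j}-{k}. disagree x i j * disagree x k l) = disagree x i j * c"
    if i: "i < n" and j: "j \<in> {..<n}-{i}" for i j
  proof -
    have "(\<Sum>k\<in>{..<n}-{i,j}. \<Sum>l\<in>{..<n}-{i,j}-{k}. disagree x i j * disagree x k l)
        = disagree x i j * (\<Sum>k\<in>{..<n}-{i,j}. \<Sum>l\<in>{..<n}-{i,j}-{k}. disagree x k l)"
      by (simp add: sum_distrib_left del: sum_of_bool_eq)
    also have "(\<Sum>k\<in>{..<n}-{i,j}. \<Sum>l\<in>{..<n}-{i,j}-{k}. disagree x k l)
        = 2 * real (card {k\<in>{..<n}-{i,j}. x k = 1}) * real (card {k\<in>{..<n}-{i,j}. x k = -1})"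
      by (rule sum_ordered_pairs_disagree) (use sign_vecs_pm1[OF x] in auto)
    finally have e: "(\<Sum>k\<in>{..<n}-{i,j}. \<Sum>l\<in>{..<n}-{i,j}-{k}. disagree x i j * disagree x k l)
        = disagree x i j * (2 * real (card {k\<in>{..<n}-{i,j}. x k = 1}) * real (card {k\<in>{..<n}-{i,j}. x k = -1}))" .
    show ?thesis
    proof (cases "x i = x j")
      case True
      then show ?thesis using e by simp
    next
      case False
      have jn: "j < n" using j by auto
      show ?thesis unfolding e c_def card_ones_remove_disagreeing_pair[OF x i jn False] card_sign_vec_ones[OF x] by simp
    qed
  qed
  have "(\<Sum>i<n. \<Sum>j\<in>{..<n}-{i}. \<Sum>k\<in>{..<n}-{i,j}. \<Sum>l\<in>{..<n}-{i,j}-{k}. disagree x i j * disagree x k l)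
      = (\<Sum>i<n. \<Sum>j\<in>{..<n}-{i}. disagree x i j * c)"
    by (rule sum.cong[OF refl], rule sum.cong[OF refl], rule inner) auto
  also have "\<dots> = (\<Sum>i<n. \<Sum>j\<in>{..<n}-{i}. disagree x i j) * c"
    by (simp add: sum_distrib_right del: sum_of_bool_eq)
  also have "\<dots> = (2 * ((real n + real_of_int s) / 2) * ((real n - real_of_int s) / 2)) * c"
    unfolding sum_ordered_pairs_disagree_sign_vec[OF x] ..
  finally show ?thesis unfolding c_def .
qed

lemma real_card_lessThan_remove1: "i < n \<Longrightarrow> real (card ({..<n} - {i})) = real n - 1"
  using real_card_Diff_singleton[of "{..<n}" i] by simp

lemma real_card_lessThan_remove2: "i < n \<Longrightarrow> j \<in> {..<n} - {i} \<Longrightarrow> real (card ({..<n} - {i, j})) = real n - 2"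
proof -
  assume i: "i < n" and j: "j \<in> {..<n} - {i}"
  have e: "{..<n} - {i, j} = ({..<n} - {i}) - {j}" by auto
  show ?thesis unfolding e using real_card_Diff_singleton[of "{..<n} - {i}" j] j real_card_lessThan_remove1[OF i] by simp
qed

lemma real_card_lessThan_remove3: "i < n \<Longrightarrow> j \<in> {..<n} - {i} \<Longrightarrow> k \<in> {..<n} - {i, j} \<Longrightarrow> real (card ({..<n} - {i, j} - {k})) = real n - 3"
proof -
  assume i: "i < n" and j: "j \<in> {..<n} - {i}" and k: "k \<in> {..<n} - {i, j}"
  show ?thesis using real_card_Diff_singleton[of "{..<n} - {i, j}" k] k real_card_lessThan_remove2[OF i j] by simp
qed

lemma disagree_count2_eq:
  "real n * (real n - 1) * (real n - 2) * (real n - 3) * real (disagree_count2 n s 0 1 2 3) =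
     real (card (sign_vecs n s)) * ((2 * ((real n + real_of_int s) / 2) * ((real n - real_of_int s) / 2)) *
         (2 * ((real n + real_of_int s) / 2 - 1) * ((real n - real_of_int s) / 2 - 1)))"
proof -
  define \<Omega> where "\<Omega> = sign_vecs n s"
  define c where "c = (2 * ((real n + real_of_int s) / 2) * ((real n - real_of_int s) / 2)) *
         (2 * ((real n + real_of_int s) / 2 - 1) * ((real n - real_of_int s) / 2 - 1))"
  define C where "C = real (disagree_count2 n s 0 1 2 3)"
  have "real (card \<Omega>) * c = (\<Sum>x\<in>\<Omega>. c)" by simp
  also have "\<dots> = (\<Sum>x\<in>\<Omega>. \<Sum>i<n. \<Sum>j\<in>{..<n}-{i}. \<Sum>k\<in>{..<n}-{i,j}. \<Sum>l\<in>{..<n}-{i,j}-{k}. disagree x i j * disagree x k l)"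
    by (rule sum.cong[OF refl]) (simp only: c_def sum_ordered_quadruples_disagree \<Omega>_def)
  also have "\<dots> = (\<Sum>i<n. \<Sum>x\<in>\<Omega>. \<Sum>j\<in>{..<n}-{i}. \<Sum>k\<in>{..<n}-{i,j}. \<Sum>l\<in>{..<n}-{i,j}-{k}. disagree x i j * disagree x k l)"
    by (rule sum.swap)
  also have "\<dots> = (\<Sum>i<n. \<Sum>j\<in>{..<n}-{i}. \<Sum>x\<in>\<Omega>. \<Sum>k\<in>{..<n}-{i,j}. \<Sum>l\<in>{..<n}-{i,j}-{k}. disagree x i j * disagree x k l)"
    by (rule sum.cong[OF refl], rule sum.swap)
  also have "\<dots> = (\<Sum>i<n. \<Sum>j\<in>{..<n}-{i}. \<Sum>k\<in>{..<n}-{i,j}. \<Sum>x\<in>\<Omega>. \<Sum>l\<in>{..<n}-{i,j}-{k}. disagree x i j * disagree x k l)"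
    by (rule sum.cong[OF refl], rule sum.cong[OF refl], rule sum.swap)
  also have "\<dots> = (\<Sum>i<n. \<Sum>j\<in>{..<n}-{i}. \<Sum>k\<in>{..<n}-{i,j}. \<Sum>l\<in>{..<n}-{i,j}-{k}. \<Sum>x\<in>\<Omega>. disagree x i j * disagree x k l)"
    by (rule sum.cong[OF refl], rule sum.cong[OF refl], rule sum.cong[OF refl], rule sum.swap)
  also have "\<dots> = (\<Sum>i<n. \<Sum>j\<in>{..<n}-{i}. \<Sum>k\<in>{..<n}-{i,j}. \<Sum>l\<in>{..<n}-{i,j}-{k}. C)"
  proof (rule sum.cong[OF refl], rule sum.cong[OF refl], rule sum.cong[OF refl], rule sum.cong[OF refl])
    fix i j k l assume i: "i \<in> {..<n}" and j: "j \<in> {..<n}-{i}" and k: "k \<in> {..<n}-{i,j}" and l: "l \<in> {..<n}-{i,j}-{k}"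
    have "(\<Sum>x\<in>\<Omega>. disagree x i j * disagree x k l) = (\<Sum>x\<in>\<Omega>. of_bool (x i \<noteq> x j \<and> x k \<noteq> x l))"
      by (rule sum.cong[OF refl]) simp
    also have "\<dots> = real (disagree_count2 n s i j k l)" unfolding disagree_count2_def \<Omega>_def by (rule sum_of_bool_card[OF finite_sign_vecs])
    also have "disagree_count2 n s i j k l = disagree_count2 n s 0 1 2 3" by (rule disagree_count2_normalize) (use i j k l in auto)
    finally show "(\<Sum>x\<in>\<Omega>. disagree x i j * disagree x k l) = C" unfolding C_def .
  qed
  also have "\<dots> = (\<Sum>i<n. \<Sum>j\<in>{..<n}-{i}. \<Sum>k\<in>{..<n}-{i,j}. (real n - 3) * C)"
    by (rule sum.cong[OF refl], rule sum.cong[OF refl], rule sum.cong[OF refl]) (simp add: real_card_lessThan_remove3)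
  also have "\<dots> = (\<Sum>i<n. \<Sum>j\<in>{..<n}-{i}. (real n - 2) * ((real n - 3) * C))"
    by (rule sum.cong[OF refl], rule sum.cong[OF refl]) (simp add: real_card_lessThan_remove2)
  also have "\<dots> = (\<Sum>i<n. (real n - 1) * ((real n - 2) * ((real n - 3) * C)))"
    by (rule sum.cong[OF refl]) (simp add: real_card_lessThan_remove1)
  also have "\<dots> = real n * (real n - 1) * (real n - 2) * (real n - 3) * C" by (simp add: algebra_simps)
  finally show ?thesis unfolding \<Omega>_def c_def C_def by simp
qed

context
  fixes n :: nat and s :: int and P :: "(nat \<times> nat) set"
  assumes P: "pair_matching {..<n} P"
begin

lemma card_discordant_eq_sum: "real (card (discordant_pairs P x)) = (\<Sum>p\<in>P. disagree x (fst p) (snd p))"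
  unfolding discordant_pairs_def by (rule sum_of_bool_card[symmetric]) (rule pair_matching_finite[OF P])

lemma sum_disagree_pair:
  assumes "p \<in> P"
  shows "(\<Sum>x\<in>sign_vecs n s. disagree x (fst p) (snd p)) = real (disagree_count n s 0 1)"
proof -
  have "(\<Sum>x\<in>sign_vecs n s. disagree x (fst p) (snd p)) = real (disagree_count n s (fst p) (snd p))"
    unfolding disagree_count_def by (rule sum_of_bool_card[OF finite_sign_vecs])
  also have "disagree_count n s (fst p) (snd p) = disagree_count n s 0 1"
    using pair_matchingD[OF P assms] by (intro disagree_count_normalize) auto
  finally show ?thesis .
qed

lemma sum_disagree_two_pairs:
  assumes "p \<in> P" "r \<in> P" "p \<noteq> r"
  shows "(\<Sum>x\<in>sign_vecs n s. disagree x (fst p) (snd p) * disagree x (fst r) (snd r))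
           = real (disagree_count2 n s 0 1 2 3)"
proof -
  have "(\<Sum>x\<in>sign_vecs n s. disagree x (fst p) (snd p) * disagree x (fst r) (snd r))
      = (\<Sum>x\<in>sign_vecs n s. of_bool (x (fst p) \<noteq> x (snd p) \<and> x (fst r) \<noteq> x (snd r)))"
    by (rule sum.cong[OF refl]) simp
  also have "\<dots> = real (disagree_count2 n s (fst p) (snd p) (fst r) (snd r))"
    unfolding disagree_count2_def by (rule sum_of_bool_card[OF finite_sign_vecs])
  also have "distinct [fst p, snd p, fst r, snd r]"
    using pair_matchingD(3)[OF P] pair_matching_unique[OF P assms(1,2)] assms by auto
  then have "disagree_count2 n s (fst p) (snd p) (fst r) (snd r) = disagree_count2 n s 0 1 2 3"
    using pair_matchingD[OF P assms(1)] pair_matchingD[OF P assms(2)] by (intro disagree_count2_normalize) auto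
  finally show ?thesis .
qed

lemma sum_card_discordant:
  "(\<Sum>x\<in>sign_vecs n s. real (card (discordant_pairs P x))) = real (card P) * real (disagree_count n s 0 1)"
proof -
  have "(\<Sum>x\<in>sign_vecs n s. real (card (discordant_pairs P x)))
      = (\<Sum>p\<in>P. \<Sum>x\<in>sign_vecs n s. disagree x (fst p) (snd p))"
    unfolding card_discordant_eq_sum by (rule sum.swap)
  also have "\<dots> = real (card P) * real (disagree_count n s 0 1)"
    using sum_disagree_pair by simp
  finally show ?thesis .
qed

lemma sum_card_discordant_sq:
  "(\<Sum>x\<in>sign_vecs n s. (real (card (discordant_pairs P x)))\<^sup>2) =
     real (card P) * real (disagree_count n s 0 1)
     + real (card P) * (real (card P) - 1) * real (disagree_count2 n s 0 1 2 3)"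
proof -
  have "(\<Sum>x\<in>sign_vecs n s. (real (card (discordant_pairs P x)))\<^sup>2)
      = (\<Sum>x\<in>sign_vecs n s. \<Sum>p\<in>P. \<Sum>r\<in>P. disagree x (fst p) (snd p) * disagree x (fst r) (snd r))"
    unfolding card_discordant_eq_sum power2_eq_square by (simp only: sum_product)
  also have "\<dots> = (\<Sum>p\<in>P. \<Sum>r\<in>P. \<Sum>x\<in>sign_vecs n s. disagree x (fst p) (snd p) * disagree x (fst r) (snd r))"
    by (subst sum.swap) (rule sum.cong[OF refl], rule sum.swap)
  also have "\<dots> = (\<Sum>p\<in>P. real (disagree_count n s 0 1) + (real (card P) - 1) * real (disagree_count2 n s 0 1 2 3))"
  proof (rule sum.cong[OF refl])
    fix p assume p: "p \<in> P"
    have "(\<Sum>r\<in>P. \<Sum>x\<in>sign_vecs n s. disagree x (fst p) (snd p) * disagree x (fst r) (snd r))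
        = (\<Sum>x\<in>sign_vecs n s. disagree x (fst p) (snd p) * disagree x (fst p) (snd p))
          + (\<Sum>r\<in>P - {p}. \<Sum>x\<in>sign_vecs n s. disagree x (fst p) (snd p) * disagree x (fst r) (snd r))"
      by (rule sum.remove[OF pair_matching_finite[OF P] p])
    also have "\<dots> = (\<Sum>x\<in>sign_vecs n s. disagree x (fst p) (snd p))
          + (\<Sum>r\<in>P - {p}. real (disagree_count2 n s 0 1 2 3))"
      using sum_disagree_two_pairs[OF p] by (intro arg_cong2[where f = "(+)"] sum.cong) auto
    finally show "(\<Sum>r\<in>P. \<Sum>x\<in>sign_vecs n s. disagree x (fst p) (snd p) * disagree x (fst r) (snd r))
        = real (disagree_count n s 0 1) + (real (card P) - 1) * real (disagree_count2 n s 0 1 2 3)"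
      using sum_disagree_pair[OF p] real_card_Diff_singleton[OF pair_matching_finite[OF P] p] by simp
  qed
  also have "\<dots> = real (card P) * real (disagree_count n s 0 1)
      + real (card P) * (real (card P) - 1) * real (disagree_count2 n s 0 1 2 3)"
    by (simp add: algebra_simps)
  finally show ?thesis .
qed

end

lemma inverse_falling_factorial_gap:
  fixes n :: real
  assumes n: "n \<ge> 4"
  shows "1 / (n * (n - 1) * (n - 2) * (n - 3)) - 1 / (n * (n - 1))\<^sup>2 \<le> 64 / n ^ 5"
proof -
  define D2 D4 where "D2 = n * (n - 1)" "D4 = n * (n - 1) * (n - 2) * (n - 3)"
  have pos: "D2 > 0" "D4 > 0" unfolding D2_D4_def using n by simp_all
  have gap: "D2\<^sup>2 - D4 = D2 * (4 * n - 6)" unfolding D2_D4_def by algebra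
  have "1 / D4 - 1 / D2\<^sup>2 = (D2\<^sup>2 - D4) / (D4 * D2\<^sup>2)" using pos by (simp add: field_simps)
  also have "\<dots> = (4 * n - 6) / (D4 * D2)" unfolding gap using pos by (simp add: power2_eq_square)
  also have "\<dots> \<le> 64 / n ^ 5"
  proof -
    define m where "m = n - 4"
    have "64 * (n - 1)\<^sup>2 * (n - 2) * (n - 3) - n ^ 3 * (4 * n - 6)
        = 512 + 1760 * m + 1544 * m\<^sup>2 + 518 * m ^ 3 + 60 * m ^ 4"
      unfolding m_def by algebra
    moreover have "m \<ge> 0" using n unfolding m_def by simp
    ultimately have "n ^ 3 * (4 * n - 6) \<le> 64 * (n - 1)\<^sup>2 * (n - 2) * (n - 3)"
      by (smt (verit) zero_le_power)
    then have "n\<^sup>2 * (n ^ 3 * (4 * n - 6)) \<le> n\<^sup>2 * (64 * (n - 1)\<^sup>2 * (n - 2) * (n - 3))"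
      by (intro mult_left_mono) auto
    then have "n ^ 5 * (4 * n - 6) \<le> 64 * (D4 * D2)"
      unfolding D2_D4_def by (simp add: power2_eq_square eval_nat_numeral algebra_simps)
    then show ?thesis using pos n by (simp add: divide_le_eq le_divide_eq algebra_simps)
  qed
  finally show ?thesis unfolding D2_D4_def .
qed

lemma covariance_term_bound:
  fixes N n q X Y C2 C4 :: real
  assumes N: "N > 0" and n: "n \<ge> 4" and q: "q \<ge> 0" "2 * q \<le> n" and X: "0 \<le> X" "4 * X \<le> n\<^sup>2"
    and Y: "Y \<le> X" and C4: "C4 \<ge> 0"
    and h2: "n * (n - 1) * C2 = 2 * X * N" and h4: "n * (n - 1) * (n - 2) * (n - 3) * C4 = 4 * X * Y * N"
  shows "q * (q - 1) * C4 - q\<^sup>2 * C2\<^sup>2 / N \<le> 8 * q * N"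
proof -
  define D2 D4 where "D2 = n * (n - 1)" "D4 = n * (n - 1) * (n - 2) * (n - 3)"
  have pos: "D2 > 0" "D4 > 0" unfolding D2_D4_def using n by simp_all
  have "C4 = 4 * X * Y * N / D4" using h4 pos unfolding D2_D4_def by (simp add: field_simps)
  also have "\<dots> \<le> 4 * X * X * N / D4"
    using X Y N pos by (intro divide_right_mono mult_right_mono mult_left_mono) auto
  finally have c4: "C4 \<le> 4 * X\<^sup>2 * N / D4" by (simp add: power2_eq_square)
  have "C2 * D2 = 2 * X * N" using h2 unfolding D2_D4_def by (simp add: mult.commute)
  then have "C2 = 2 * X * N / D2" using pos by (simp add: eq_divide_eq)
  then have "C2\<^sup>2 / N = 4 * X\<^sup>2 * N / D2\<^sup>2" using N by (simp add: power2_eq_square field_simps)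
  then have "C4 - C2\<^sup>2 / N \<le> 4 * X\<^sup>2 * N * (1 / D4 - 1 / D2\<^sup>2)"
    using c4 by (simp add: right_diff_distrib)
  also have "\<dots> \<le> 4 * X\<^sup>2 * N * (64 / n ^ 5)"
    using inverse_falling_factorial_gap[OF n] N unfolding D2_D4_def by (intro mult_left_mono) auto
  also have "\<dots> \<le> 4 * (n\<^sup>2 / 4)\<^sup>2 * N * (64 / n ^ 5)"
    using X N n by (intro mult_right_mono power_mono) auto
  also have "\<dots> = 16 * N / n" using n by (simp add: power2_eq_square eval_nat_numeral field_simps)
  finally have cov: "C4 - C2\<^sup>2 / N \<le> 16 * N / n" .
  have "q * (q - 1) * C4 - q\<^sup>2 * C2\<^sup>2 / N \<le> q\<^sup>2 * (C4 - C2\<^sup>2 / N)"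
    using q C4 by (simp add: power2_eq_square algebra_simps)
  also have "\<dots> \<le> q\<^sup>2 * (16 * N / n)" using cov by (intro mult_left_mono) auto
  also have "\<dots> \<le> q * (n / 2) * (16 * N / n)"
    using mult_left_mono[OF q(2) q(1)] N n by (intro mult_right_mono) (auto simp: power2_eq_square)
  also have "\<dots> = 8 * q * N" using n by simp
  finally show ?thesis .
qed


lemma sum_sq_deviation_eq:
  fixes f :: "'a \<Rightarrow> real"
  assumes "finite A" "A \<noteq> {}"
  shows "(\<Sum>x\<in>A. (f x - sum f A / card A)\<^sup>2) = (\<Sum>x\<in>A. (f x)\<^sup>2) - (sum f A)\<^sup>2 / card A"
proof -
  define \<mu> where "\<mu> = sum f A / card A"
  have N: "real (card A) > 0" using assms by (simp add: card_gt_0_iff)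
  have "(\<Sum>x\<in>A. (f x - \<mu>)\<^sup>2) = (\<Sum>x\<in>A. (f x)\<^sup>2 - 2 * \<mu> * f x + \<mu>\<^sup>2)"
    by (rule sum.cong) (simp_all add: power2_eq_square algebra_simps)
  also have "\<dots> = (\<Sum>x\<in>A. (f x)\<^sup>2) - 2 * \<mu> * sum f A + \<mu>\<^sup>2 * card A"
    by (simp add: sum.distrib sum_subtractf sum_distrib_left)
  also have "\<dots> = (\<Sum>x\<in>A. (f x)\<^sup>2) - (sum f A)\<^sup>2 / card A"
    unfolding \<mu>_def using N by (simp add: power2_eq_square field_simps)
  finally show ?thesis unfolding \<mu>_def .
qed

lemma card_below_half_mean:
  fixes f :: "'a \<Rightarrow> real"
  assumes "finite A" "\<forall>x\<in>A. f x \<ge> 0" "\<mu> > 0"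
  shows "real (card {x\<in>A. f x < \<mu> / 2}) * (\<mu> / 2)\<^sup>2 \<le> (\<Sum>x\<in>A. (f x - \<mu>)\<^sup>2)"
proof -
  have "real (card {x\<in>A. f x < \<mu> / 2}) * (\<mu> / 2)\<^sup>2 = (\<Sum>x\<in>{x\<in>A. f x < \<mu> / 2}. (\<mu> / 2)\<^sup>2)" by simp
  also have "\<dots> \<le> (\<Sum>x\<in>{x\<in>A. f x < \<mu> / 2}. (f x - \<mu>)\<^sup>2)"
  proof (rule sum_mono)
    fix x assume "x \<in> {x\<in>A. f x < \<mu> / 2}"
    then have "\<mu> / 2 \<le> \<bar>f x - \<mu>\<bar>" using assms(2) by auto
    then have "(\<mu> / 2)\<^sup>2 \<le> \<bar>f x - \<mu>\<bar>\<^sup>2" using assms(3) by (intro power_mono) auto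
    then show "(\<mu> / 2)\<^sup>2 \<le> (f x - \<mu>)\<^sup>2" by simp
  qed
  also have "\<dots> \<le> (\<Sum>x\<in>A. (f x - \<mu>)\<^sup>2)"
    using assms(1) by (intro sum_mono2) auto
  finally show ?thesis .
qed

context
  fixes n :: nat and s :: int and \<epsilon> :: real
  assumes \<epsilon>: "0 < \<epsilon>" "\<epsilon> \<le> 1" and s: "\<bar>real_of_int s\<bar> \<le> (1 - \<epsilon>) * real n"
    and n: "n \<ge> 2"
begin

lemma disagree_count_lower:
  "real (disagree_count n s 0 1) \<ge> \<epsilon>\<^sup>2 / 2 * real (card (sign_vecs n s))"
proof -
  define A B where "A = (real n + real_of_int s) / 2" "B = (real n - real_of_int s) / 2"
  define N where "N = real (card (sign_vecs n s))"
  have "A \<ge> \<epsilon> * real n / 2" "B \<ge> \<epsilon> * real n / 2" "\<epsilon> * real n / 2 \<ge> 0"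
    unfolding A_B_def using s \<epsilon> by (auto simp: abs_le_iff algebra_simps)
  then have AB: "A * B \<ge> (\<epsilon> * real n / 2)\<^sup>2" unfolding power2_eq_square by (intro mult_mono) auto
  have nn: "0 < real n * (real n - 1)" "real n * (real n - 1) \<le> (real n)\<^sup>2"
    using n by (auto simp: power2_eq_square)
  have "\<epsilon>\<^sup>2 / 2 * N = N * (2 * (\<epsilon> * real n / 2)\<^sup>2) / (real n)\<^sup>2"
    using n by (simp add: power2_eq_square field_simps)
  also have "\<dots> \<le> N * (2 * A * B) / (real n)\<^sup>2"
    using AB by (intro divide_right_mono mult_left_mono) (auto simp: N_def)
  also have "\<dots> \<le> N * (2 * A * B) / (real n * (real n - 1))"
  proof (rule divide_left_mono)
    have "0 \<le> A * B" using AB by (meson order_trans zero_le_power2)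
    then show "0 \<le> N * (2 * A * B)" unfolding N_def by simp
  qed (use nn n in auto)
  also have "\<dots> = real (disagree_count n s 0 1)"
    using disagree_count_eq[of n s, folded A_B_def N_def, symmetric] nn(1)
    by (metis less_irrefl nonzero_mult_div_cancel_left)
  finally show ?thesis unfolding N_def .
qed

lemma disagree_counts_covariance_bound:
  assumes q: "2 \<le> q" "2 * q \<le> real n" and "sign_vecs n s \<noteq> {}"
  shows "q * (q - 1) * real (disagree_count2 n s 0 1 2 3)
           - (q * real (disagree_count n s 0 1))\<^sup>2 / real (card (sign_vecs n s))
         \<le> 8 * q * real (card (sign_vecs n s))"
proof -
  define N where "N = real (card (sign_vecs n s))"
  define C2 C4 where "C2 = real (disagree_count n s 0 1)" "C4 = real (disagree_count2 n s 0 1 2 3)"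
  define A B where "A = (real n + real_of_int s) / 2" "B = (real n - real_of_int s) / 2"
  have N: "N > 0" using assms(3) finite_sign_vecs unfolding N_def by (simp add: card_gt_0_iff)
  have AB: "A + B = real n" unfolding A_B_def by (simp add: field_simps)
  have "\<epsilon> * real n \<ge> 0" using \<epsilon> by simp
  then have "\<bar>real_of_int s\<bar> \<le> real n" using s by (simp add: algebra_simps)
  then have "0 \<le> A" "0 \<le> B" unfolding A_B_def by (simp_all add: abs_le_iff)
  moreover have "(real n)\<^sup>2 - 4 * (A * B) = (A - B)\<^sup>2"
    unfolding AB[symmetric] by (simp add: power2_eq_square algebra_simps)
  ultimately have "4 * (A * B) \<le> (real n)\<^sup>2" "0 \<le> A * B" "(A - 1) * (B - 1) \<le> A * B"
    using AB n by (auto simp: algebra_simps)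
  moreover have "real n * (real n - 1) * C2 = 2 * (A * B) * N"
    using disagree_count_eq[of n s, folded A_B_def C2_C4_def N_def] by (simp add: algebra_simps)
  moreover have "real n * (real n - 1) * (real n - 2) * (real n - 3) * C4 = 4 * (A * B) * ((A - 1) * (B - 1)) * N"
    using disagree_count2_eq[of n s, folded A_B_def C2_C4_def N_def] by (simp add: algebra_simps)
  moreover have "real n \<ge> 4" "C4 \<ge> 0" using q unfolding C2_C4_def by auto
  ultimately show ?thesis
    using covariance_term_bound[OF N _ _ q(2), of "A * B" "(A - 1) * (B - 1)" C4 C2] q
    unfolding N_def C2_C4_def by (simp add: power_mult_distrib)
qed

lemma sum_sq_deviation_card_discordant:
  assumes P: "pair_matching {..<n} P"
  shows "(\<Sum>x\<in>sign_vecs n s. (real (card (discordant_pairs P x))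
            - real (card P) * real (disagree_count n s 0 1) / real (card (sign_vecs n s)))\<^sup>2)
         \<le> 9 * real (card P) * real (card (sign_vecs n s))"
proof (cases "sign_vecs n s = {} \<or> P = {}")
  case True
  then show ?thesis by (auto simp: discordant_pairs_def)
next
  case False
  define N where "N = real (card (sign_vecs n s))"
  define q where "q = real (card P)"
  define C2 C4 where "C2 = real (disagree_count n s 0 1)" "C4 = real (disagree_count2 n s 0 1 2 3)"
  have N: "N > 0" using False finite_sign_vecs unfolding N_def by (simp add: card_gt_0_iff)
  have q: "q \<ge> 1" "2 * q \<le> real n"
    using False pair_matching_finite[OF P] pair_matching_card_le[OF P] unfolding q_def
    by (auto simp: Suc_le_eq card_gt_0_iff simp flip: of_nat_mult of_nat_le_iff)
  have "(\<Sum>x\<in>sign_vecs n s. (real (card (discordant_pairs P x)) - q * C2 / N)\<^sup>2)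
      = q * C2 + (q * (q - 1) * C4 - (q * C2)\<^sup>2 / N)"
    using sum_sq_deviation_eq[of "sign_vecs n s" "\<lambda>x. real (card (discordant_pairs P x))"] False
      finite_sign_vecs sum_card_discordant[OF P] sum_card_discordant_sq[OF P]
    unfolding N_def q_def C2_C4_def by simp
  also have "\<dots> \<le> q * N + 8 * q * N"
  proof (rule add_mono)
    have "C2 \<le> N" unfolding C2_C4_def N_def disagree_count_def
      by (simp add: card_mono[OF finite_sign_vecs])
    then show "q * C2 \<le> q * N" using q by simp
    show "q * (q - 1) * C4 - (q * C2)\<^sup>2 / N \<le> 8 * q * N"
    proof (cases "q \<ge> 2")
      case True
      then show ?thesis
        using disagree_counts_covariance_bound[OF True q(2)] False unfolding N_def C2_C4_def by simp
    next
      case False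
      then have "card P < 2" "card P \<ge> 1" using q(1) unfolding q_def by simp_all
      then have "q = 1" unfolding q_def by simp
      then have "q * (q - 1) * C4 = 0" "0 \<le> 8 * q * N" using N by simp_all
      moreover have "0 \<le> (q * C2)\<^sup>2 / N" using N by simp
      ultimately show ?thesis by linarith
    qed
  qed
  finally show ?thesis unfolding N_def q_def C2_C4_def by simp
qed

end


context
  fixes n :: nat and s :: int and \<epsilon> :: real and P :: "(nat \<times> nat) set"
  assumes \<epsilon>: "0 < \<epsilon>" "\<epsilon> \<le> 1" and s: "\<bar>real_of_int s\<bar> \<le> (1 - \<epsilon>) * real n"
    and P: "pair_matching {..<n} P" "P \<noteq> {}"
begin

lemma card_few_discordant_le:
  "real (card {x\<in>sign_vecs n s. real (card (discordant_pairs P x)) < card P * \<epsilon>\<^sup>2 / 4})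
     \<le> 144 / (card P * \<epsilon> ^ 4) * card (sign_vecs n s)"
proof (cases "sign_vecs n s = {}")
  case False
  define N q where "N = real (card (sign_vecs n s))" "q = real (card P)"
  define d where "d x = real (card (discordant_pairs P x))" for x
  define \<mu> where "\<mu> = q * real (disagree_count n s 0 1) / N"
  have N: "N > 0" using False finite_sign_vecs unfolding N_q_def by (simp add: card_gt_0_iff)
  have q: "q \<ge> 1" using P pair_matching_finite[OF P(1)] unfolding N_q_def
    by (simp add: Suc_le_eq card_gt_0_iff)
  have n: "n \<ge> 2" using pair_matching_card_le[OF P(1)] q unfolding N_q_def by simp
  have \<mu>: "\<mu> \<ge> q * \<epsilon>\<^sup>2 / 2"
    using mult_left_mono[OF disagree_count_lower[OF \<epsilon> s n], of q] q N
    unfolding \<mu>_def N_q_def by (simp add: field_simps)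
  have \<mu>_pos: "\<mu> > 0" using \<mu> q \<epsilon> by (smt (verit) zero_less_power divide_pos_pos mult_pos_pos)
  define L where "L = {x\<in>sign_vecs n s. d x < \<mu> / 2}"
  have "real (card L) * (\<mu> / 2)\<^sup>2 \<le> 9 * q * N"
    using card_below_half_mean[OF finite_sign_vecs[of n s] _ \<mu>_pos, where f = d] sum_sq_deviation_card_discordant[OF \<epsilon> s n P(1)]
    unfolding L_def d_def \<mu>_def N_q_def by simp
  moreover have "(q * \<epsilon>\<^sup>2 / 4)\<^sup>2 \<le> (\<mu> / 2)\<^sup>2" using \<mu> q \<epsilon> by (intro power_mono) auto
  ultimately have "real (card L) * (q * \<epsilon>\<^sup>2 / 4)\<^sup>2 \<le> 9 * q * N"
    by (smt (verit) mult_left_mono of_nat_0_le_iff)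
  then have "real (card L) \<le> 144 / (q * \<epsilon> ^ 4) * N"
    using q \<epsilon> by (simp add: power2_eq_square power4_eq_xxxx field_simps)
  moreover have "{x\<in>sign_vecs n s. d x < q * \<epsilon>\<^sup>2 / 4} \<subseteq> L" using \<mu> unfolding L_def by auto
  then have "card {x\<in>sign_vecs n s. d x < q * \<epsilon>\<^sup>2 / 4} \<le> card L"
    by (intro card_mono) (simp_all add: L_def finite_sign_vecs)
  ultimately show ?thesis unfolding d_def N_q_def by linarith
qed simp

lemma sum_central_binom_prob_discordant_le:
  "(\<Sum>y\<in>sign_vecs n s. central_binom_prob (card (discordant_pairs P y)))
     \<le> (144 / \<epsilon> ^ 4 + 2 / \<epsilon>) / sqrt (card P) * card (sign_vecs n s)"
proof -
  define \<Omega> N q where "\<Omega> = sign_vecs n s" "N = real (card (sign_vecs n s))" "q = real (card P)"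
  define L where "L = {x\<in>\<Omega>. real (card (discordant_pairs P x)) < q * \<epsilon>\<^sup>2 / 4}"
  have fin: "finite \<Omega>" unfolding \<Omega>_N_q_def by (rule finite_sign_vecs)
  have q: "q \<ge> 1" using P pair_matching_finite[OF P(1)] unfolding \<Omega>_N_q_def
    by (simp add: Suc_le_eq card_gt_0_iff)
  have typical: "central_binom_prob (card (discordant_pairs P x)) \<le> 2 / (\<epsilon> * sqrt q)" if "x \<in> \<Omega> - L" for x
  proof -
    have "central_binom_prob (card (discordant_pairs P x)) \<le> 1 / sqrt (q * \<epsilon>\<^sup>2 / 4)"
      using that q \<epsilon> unfolding L_def by (intro central_binom_prob_le_inverse_sqrt) auto
    also have "sqrt (q * \<epsilon>\<^sup>2 / 4) = \<epsilon> * sqrt q / 2" using \<epsilon> q by (simp add: real_sqrt_mult real_sqrt_divide)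
    finally show ?thesis by simp
  qed
  have "(\<Sum>y\<in>\<Omega>. central_binom_prob (card (discordant_pairs P y)))
      = (\<Sum>y\<in>L. central_binom_prob (card (discordant_pairs P y)))
        + (\<Sum>y\<in>\<Omega> - L. central_binom_prob (card (discordant_pairs P y)))"
    using sum.subset_diff[of L \<Omega>] fin unfolding L_def by (simp add: add.commute)
  also have "\<dots> \<le> (\<Sum>y\<in>L. 1) + (\<Sum>y\<in>\<Omega> - L. 2 / (\<epsilon> * sqrt q))"
    by (intro add_mono sum_mono central_binom_prob_le_one typical)
  also have "\<dots> \<le> 144 / (q * \<epsilon> ^ 4) * N + N * (2 / (\<epsilon> * sqrt q))"
  proof (intro add_mono)
    have "real (card (\<Omega> - L)) \<le> N" unfolding \<Omega>_N_q_def using fin by (simp add: card_mono \<Omega>_N_q_def)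
    moreover have "0 \<le> 2 / (\<epsilon> * sqrt q)" using \<epsilon> q by simp
    ultimately have "real (card (\<Omega> - L)) * (2 / (\<epsilon> * sqrt q)) \<le> N * (2 / (\<epsilon> * sqrt q))"
      by (rule mult_right_mono)
    then show "(\<Sum>y\<in>\<Omega> - L. 2 / (\<epsilon> * sqrt q)) \<le> N * (2 / (\<epsilon> * sqrt q))" by simp
  qed (use card_few_discordant_le in \<open>simp add: L_def \<Omega>_N_q_def\<close>)
  also have "\<dots> \<le> (144 / \<epsilon> ^ 4 + 2 / \<epsilon>) / sqrt q * N"
  proof -
    have "sqrt q * 1 \<le> sqrt q * sqrt q" using q by (intro mult_left_mono) auto
    then have "sqrt q \<le> q" using q by simp
    then have "144 / (q * \<epsilon> ^ 4) \<le> 144 / (sqrt q * \<epsilon> ^ 4)"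
      using q \<epsilon> by (intro divide_left_mono mult_right_mono) auto
    then show ?thesis using q \<epsilon> unfolding \<Omega>_N_q_def by (simp add: field_simps mult_right_mono)
  qed
  finally show ?thesis unfolding \<Omega>_N_q_def .
qed

lemma card_window_le_inverse_sqrt:
  assumes "\<forall>p\<in>P. w (fst p) - w (snd p) > \<beta>" "\<beta> \<ge> 0"
  shows "real (card {y\<in>sign_vecs n s. \<bar>weighted_sum n w y - t\<bar> \<le> \<beta>})
           \<le> (144 / \<epsilon> ^ 4 + 2 / \<epsilon>) / sqrt (card P) * card (sign_vecs n s)"
  using card_window_le_sum_central_binom_prob[OF P(1) assms] sum_central_binom_prob_discordant_le
  by (rule order_trans)

end


lemma pair_matching_insert:
  assumes P: "pair_matching (S - {i, j}) P" and "i \<in> S" "j \<in> S" "i \<noteq> j"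
  shows "pair_matching S (insert (i, j) P)"
proof -
  have ends: "fst p \<in> S - {i, j}" "snd p \<in> S - {i, j}" if "p \<in> P" for p
    using pair_matchingD(1,2)[OF P that] .
  have new: "{i, j} \<inter> {fst p, snd p} = {}" if "p \<in> P" for p
    using ends[OF that] by blast
  have "\<forall>p\<in>insert (i, j) P. \<forall>p'\<in>insert (i, j) P. p \<noteq> p' \<longrightarrow> {fst p, snd p} \<inter> {fst p', snd p'} = {}"
  proof (intro ballI impI)
    fix p p' assume "p \<in> insert (i, j) P" "p' \<in> insert (i, j) P" "p \<noteq> p'"
    then consider "p = (i, j)" "p' \<in> P" | "p' = (i, j)" "p \<in> P" | "p \<in> P" "p' \<in> P" by auto
    then show "{fst p, snd p} \<inter> {fst p', snd p'} = {}"
    proof cases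
      case 3
      then show ?thesis using P \<open>p \<noteq> p'\<close> unfolding pair_matching_def by blast
    qed (use new in auto)
  qed
  moreover have "finite (insert (i, j) P)" using pair_matching_finite[OF P] by simp
  moreover have "\<forall>p\<in>insert (i, j) P. fst p \<in> S \<and> snd p \<in> S \<and> fst p \<noteq> snd p"
    using ends pair_matchingD(3)[OF P] assms(2-4) by auto
  ultimately show ?thesis unfolding pair_matching_def by blast
qed

lemma exists_far_matching:
  fixes v :: "'a \<Rightarrow> 'b::metric_space"
  assumes "finite S" "R \<ge> 0"
  shows "\<exists>P. pair_matching S P \<and> (\<forall>p\<in>P. dist (v (fst p)) (v (snd p)) > R) \<and>
            (\<forall>i\<in>S - matched_points P. \<forall>j\<in>S - matched_points P. dist (v i) (v j) \<le> R)"
  using assms(1)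
proof (induction S rule: finite_psubset_induct)
  case (psubset S)
  show ?case
  proof (cases "\<forall>i\<in>S. \<forall>j\<in>S. dist (v i) (v j) \<le> R")
    case True
    then show ?thesis by (intro exI[of _ "{}"]) (simp add: pair_matching_def matched_points_def)
  next
    case False
    then obtain i j where ij: "i \<in> S" "j \<in> S" "dist (v i) (v j) > R" by (meson not_le)
    have "i \<noteq> j" using ij assms(2) by auto
    have sub: "S - {i, j} \<subset> S" using ij by auto
    from psubset.IH[OF sub] obtain P where P: "pair_matching (S - {i, j}) P"
      "\<forall>p\<in>P. dist (v (fst p)) (v (snd p)) > R"
      "\<forall>k\<in>S - {i, j} - matched_points P. \<forall>l\<in>S - {i, j} - matched_points P. dist (v k) (v l) \<le> R"
      by (elim exE conjE)
    have "pair_matching S (insert (i, j) P)" using pair_matching_insert[OF P(1)] ij \<open>i \<noteq> j\<close> by simp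
    moreover have "S - matched_points (insert (i, j) P) = S - {i, j} - matched_points P"
      unfolding matched_points_def by auto
    moreover have "\<forall>p\<in>insert (i, j) P. dist (v (fst p)) (v (snd p)) > R" using P(2) ij by simp
    ultimately show ?thesis using P(3) by (intro exI[of _ "insert (i, j) P"]) simp
  qed
qed

lemma exists_oriented_matching:
  fixes w :: "'a \<Rightarrow> real"
  assumes "pair_matching S P"
  shows "\<exists>Q. pair_matching S Q \<and> card Q = card P \<and>
           (\<forall>q\<in>Q. \<exists>p\<in>P. w (fst q) - w (snd q) = \<bar>w (fst p) - w (snd p)\<bar>)"
proof -
  define orient where "orient p = (if w (snd p) \<le> w (fst p) then p else (snd p, fst p))" for p
  have same_ends: "{fst (orient p), snd (orient p)} = {fst p, snd p}" for p
    unfolding orient_def by auto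
  have "inj_on orient P"
  proof (rule inj_onI)
    fix p p' assume "p \<in> P" "p' \<in> P" "orient p = orient p'"
    then show "p = p'" using pair_matching_unique[OF assms, of p p' "fst p"] same_ends[of p] same_ends[of p'] by auto
  qed
  moreover have "pair_matching S (orient ` P)"
  proof -
    have "finite (orient ` P)" using pair_matching_finite[OF assms] by simp
    moreover have "\<forall>q\<in>orient ` P. fst q \<in> S \<and> snd q \<in> S \<and> fst q \<noteq> snd q"
      using pair_matchingD[OF assms] by (auto simp: orient_def)
    moreover have "{fst q, snd q} \<inter> {fst q', snd q'} = {}"
      if q: "q \<in> orient ` P" "q' \<in> orient ` P" "q \<noteq> q'" for q q'
    proof -
      obtain p p' where "p \<in> P" "p' \<in> P" "q = orient p" "q' = orient p'" using q(1,2) by auto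
      moreover have "p \<noteq> p'" using q(3) calculation(3,4) by auto
      ultimately have "{fst p, snd p} \<inter> {fst p', snd p'} = {}" using assms unfolding pair_matching_def by blast
      then show ?thesis using same_ends \<open>q = orient p\<close> \<open>q' = orient p'\<close> by metis
    qed
    ultimately show ?thesis unfolding pair_matching_def by blast
  qed
  moreover have "\<forall>q\<in>orient ` P. \<exists>p\<in>P. w (fst q) - w (snd q) = \<bar>w (fst p) - w (snd p)\<bar>"
  proof
    fix q assume "q \<in> orient ` P"
    then obtain p where p: "p \<in> P" "q = orient p" by auto
    then have "w (fst q) - w (snd q) = \<bar>w (fst p) - w (snd p)\<bar>" unfolding orient_def by auto
    then show "\<exists>p\<in>P. w (fst q) - w (snd q) = \<bar>w (fst p) - w (snd p)\<bar>" using p(1) by blast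
  qed
  ultimately show ?thesis by (intro exI[of _ "orient ` P"]) (simp add: card_image)
qed

lemma exists_coordinate_separated_half:
  fixes v :: "'a \<Rightarrow> real ^ 2"
  assumes "finite P" "\<forall>p\<in>P. dist (v (fst p)) (v (snd p)) > 2 * \<beta>"
  shows "\<exists>c Q. Q \<subseteq> P \<and> card P \<le> 2 * card Q \<and> (\<forall>p\<in>Q. \<bar>v (fst p) $ c - v (snd p) $ c\<bar> > \<beta>)"
proof -
  have sep: "2 * \<beta> < \<bar>v (fst p) $ 1 - v (snd p) $ 1\<bar> + \<bar>v (fst p) $ 2 - v (snd p) $ 2\<bar>" if "p \<in> P" for p
  proof -
    have "dist (v (fst p)) (v (snd p)) \<le> \<bar>v (fst p) $ 1 - v (snd p) $ 1\<bar> + \<bar>v (fst p) $ 2 - v (snd p) $ 2\<bar>"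
      using norm_le_l1_cart[of "v (fst p) - v (snd p)"] by (simp add: sum_2 dist_norm)
    moreover have "dist (v (fst p)) (v (snd p)) > 2 * \<beta>" using assms(2) that by blast
    ultimately show ?thesis by linarith
  qed
  define Q1 where "Q1 = {p\<in>P. \<bar>v (fst p) $ 2 - v (snd p) $ 2\<bar> \<le> \<bar>v (fst p) $ 1 - v (snd p) $ 1\<bar>}"
  have "Q1 \<subseteq> P" unfolding Q1_def by auto
  then have "card Q1 + card (P - Q1) = card P"
    using assms(1) by (simp add: card_Diff_subset card_mono finite_subset)
  then consider "card P \<le> 2 * card Q1" | "card P \<le> 2 * card (P - Q1)" by linarith
  then show ?thesis
  proof cases
    case 1
    moreover have "\<bar>v (fst p) $ 1 - v (snd p) $ 1\<bar> > \<beta>" if "p \<in> Q1" for p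
      using sep[of p] that unfolding Q1_def by simp
    ultimately show ?thesis using \<open>Q1 \<subseteq> P\<close> by blast
  next
    case 2
    moreover have "\<bar>v (fst p) $ 2 - v (snd p) $ 2\<bar> > \<beta>" if "p \<in> P - Q1" for p
      using sep[of p] that unfolding Q1_def by auto
    ultimately show ?thesis by blast
  qed
qed

lemma small_ball_prob_le_matching:
  fixes v :: "nat \<Rightarrow> real ^ 2"
  assumes P: "pair_matching {..<n} P" "P \<noteq> {}" and gap: "\<forall>p\<in>P. \<bar>v (fst p) $ c - v (snd p) $ c\<bar> > \<beta>"
    and "\<beta> \<ge> 0" and \<epsilon>: "0 < \<epsilon>" "\<epsilon> \<le> 1" and s: "\<bar>real_of_int s\<bar> \<le> (1 - \<epsilon>) * real n"
  shows "small_ball_prob n v s \<beta> z \<le> (144 / \<epsilon> ^ 4 + 2 / \<epsilon>) / sqrt (card P)"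
proof -
  define w where "w i = v i $ c" for i
  obtain Q where Q: "pair_matching {..<n} Q" "card Q = card P"
    "\<forall>q\<in>Q. \<exists>p\<in>P. w (fst q) - w (snd q) = \<bar>w (fst p) - w (snd p)\<bar>"
    using exists_oriented_matching[OF P(1)] by blast
  have "Q \<noteq> {}" using Q(2) P pair_matching_finite[OF P(1)] by auto
  have "\<forall>q\<in>Q. w (fst q) - w (snd q) > \<beta>" using Q(3) gap unfolding w_def by metis
  note window = card_window_le_inverse_sqrt[OF \<epsilon> s Q(1) \<open>Q \<noteq> {}\<close> this \<open>\<beta> \<ge> 0\<close>, of "z $ c"]
  have "{x \<in> sign_vecs n s. (\<Sum>i<n. of_int (x i) *\<^sub>R v i) \<in> cball z \<beta>}
      \<subseteq> {y \<in> sign_vecs n s. \<bar>weighted_sum n w y - z $ c\<bar> \<le> \<beta>}"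
  proof safe
    fix x assume "x \<in> sign_vecs n s" "(\<Sum>i<n. of_int (x i) *\<^sub>R v i) \<in> cball z \<beta>"
    have "\<bar>weighted_sum n w x - z $ c\<bar> = \<bar>((\<Sum>i<n. of_int (x i) *\<^sub>R v i) - z) $ c\<bar>"
      unfolding w_def weighted_sum_def by simp
    also have "\<dots> \<le> norm ((\<Sum>i<n. of_int (x i) *\<^sub>R v i) - z)" by (rule component_le_norm_cart)
    also have "\<dots> \<le> \<beta>" using \<open>(\<Sum>i<n. of_int (x i) *\<^sub>R v i) \<in> cball z \<beta>\<close>
      by (simp add: dist_norm norm_minus_commute)
    finally show "\<bar>weighted_sum n w x - z $ c\<bar> \<le> \<beta>" .
  qed
  then have "card {x \<in> sign_vecs n s. (\<Sum>i<n. of_int (x i) *\<^sub>R v i) \<in> cball z \<beta>}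
      \<le> card {y \<in> sign_vecs n s. \<bar>weighted_sum n w y - z $ c\<bar> \<le> \<beta>}"
    by (intro card_mono) (simp_all add: finite_sign_vecs)
  then have "small_ball_prob n v s \<beta> z
      \<le> real (card {y \<in> sign_vecs n s. \<bar>weighted_sum n w y - z $ c\<bar> \<le> \<beta>}) / card (sign_vecs n s)"
    unfolding small_ball_prob_def by (intro divide_right_mono) simp_all
  also have "\<dots> \<le> (144 / \<epsilon> ^ 4 + 2 / \<epsilon>) / sqrt (card P)"
    using window \<epsilon> unfolding Q(2) by (cases "card (sign_vecs n s) = 0") (simp_all add: divide_le_eq)
  finally show ?thesis .
qed

lemma inverse_sqrt_le:
  assumes "1 < n'" "n' < real n" "n' < 4 * q"
  shows "1 / sqrt q \<le> 2 * sqrt (real n) / n'"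
proof -
  have "sqrt n' / 2 \<le> sqrt q"
    using real_sqrt_le_mono[of "n' / 4" q] assms by (simp add: real_sqrt_divide)
  then have "1 / sqrt q \<le> 2 / sqrt n'" using assms by (simp add: field_simps)
  also have "\<dots> = 2 * sqrt n' / n'" using assms by (simp add: field_simps)
  also have "\<dots> \<le> 2 * sqrt (real n) / n'" using assms by (intro divide_right_mono) auto
  finally show ?thesis .
qed

lemma card_matching_gt:
  fixes v :: "nat \<Rightarrow> 'b::metric_space"
  assumes P: "pair_matching {..<n} P"
    and close: "\<forall>i\<in>{..<n} - matched_points P. \<forall>j\<in>{..<n} - matched_points P. dist (v i) (v j) \<le> R"
    and spread: "\<forall>q. real (card {i\<in>{..<n}. dist (v i) q \<le> R}) < real n - n'"
  shows "n' < 2 * real (card P)"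
proof -
  define U where "U = {..<n} - matched_points P"
  have "real (card U) < real n - n'"
  proof (cases "U = {}")
    case True
    then show ?thesis using spread[rule_format, of undefined] by simp
  next
    case False
    then obtain u where "u \<in> U" by auto
    then have "U \<subseteq> {i\<in>{..<n}. dist (v i) (v u) \<le> R}" using close unfolding U_def by auto
    then have "card U \<le> card {i\<in>{..<n}. dist (v i) (v u) \<le> R}" by (intro card_mono) auto
    then show ?thesis using spread[rule_format, of "v u"] by linarith
  qed
  moreover have "card U = n - 2 * card P" "2 * card P \<le> n"
    using card_Diff_subset[OF _ matched_points_subset[OF P subset_refl]] card_matched_points[OF P]
      pair_matching_card_le[OF P] finite_subset[OF matched_points_subset[OF P subset_refl]]
    unfolding U_def by auto
  ultimately show ?thesis by simp
qed


lemma rho_star_le_matching: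
  fixes v :: "nat \<Rightarrow> real ^ 2"
  assumes "pair_matching {..<n} P" "P \<noteq> {}" "\<forall>p\<in>P. \<bar>v (fst p) $ c - v (snd p) $ c\<bar> > \<beta>"
    and "\<beta> \<ge> 0" "0 < \<epsilon>" "\<epsilon> \<le> 1" "\<bar>real_of_int s\<bar> \<le> (1 - \<epsilon>) * real n"
  shows "rho_star n v s \<beta> \<le> (144 / \<epsilon> ^ 4 + 2 / \<epsilon>) / sqrt (card P)"
  unfolding rho_star_def by (rule cSUP_least) (use small_ball_prob_le_matching[OF assms] in auto)

lemma exists_matching_coordinate_gap:
  fixes v :: "nat \<Rightarrow> real ^ 2"
  assumes "n \<ge> 2" "0 < \<beta>"
    and spread: "\<forall>q. real (card {i\<in>{..<n}. dist (v i) q \<le> \<beta> * real n ^ 6}) < real n - n'"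
  shows "\<exists>c Q. pair_matching {..<n} Q \<and> n' < 4 * real (card Q)
           \<and> (\<forall>p\<in>Q. \<bar>v (fst p) $ c - v (snd p) $ c\<bar> > \<beta>)"
proof -
  obtain P where P: "pair_matching {..<n} P" "\<forall>p\<in>P. dist (v (fst p)) (v (snd p)) > \<beta> * real n ^ 6"
    "\<forall>i\<in>{..<n} - matched_points P. \<forall>j\<in>{..<n} - matched_points P. dist (v i) (v j) \<le> \<beta> * real n ^ 6"
    using exists_far_matching[of "{..<n}" "\<beta> * real n ^ 6" v] \<open>0 < \<beta>\<close> by auto
  \<comment> \<open>The unmatched points are pairwise close, so there are fewer than n - n' of them.\<close>
  have "n' < 2 * real (card P)" using card_matching_gt[OF P(1) P(3) spread] .
  have "real n \<le> real n ^ 6" using \<open>n \<ge> 2\<close> by (intro self_le_power) auto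
  then have "2 \<le> real n ^ 6" using \<open>n \<ge> 2\<close> by linarith
  then have "2 * \<beta> \<le> \<beta> * real n ^ 6" using \<open>0 < \<beta>\<close> by simp
  then have "\<forall>p\<in>P. dist (v (fst p)) (v (snd p)) > 2 * \<beta>" using P(2) by (auto intro: le_less_trans)
  then obtain c Q where Q: "Q \<subseteq> P" "card P \<le> 2 * card Q" "\<forall>p\<in>Q. \<bar>v (fst p) $ c - v (snd p) $ c\<bar> > \<beta>"
    using exists_coordinate_separated_half[OF pair_matching_finite[OF P(1)]] by blast
  have "real (card P) \<le> 2 * real (card Q)" using Q(2) by (simp flip: of_nat_le_iff)
  then have "n' < 4 * real (card Q)" using \<open>n' < 2 * real (card P)\<close> by linarith
  then show ?thesis using pair_matching_subset[OF P(1) Q(1)] Q(3) by blast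
qed

theorem corollary4p6:
  fixes \<epsilon> \<alpha> :: real
  assumes "0 < \<epsilon>" "\<epsilon> \<le> 1" "0 < \<alpha>" "\<alpha> < 1/2"
  shows "\<exists>C>0. \<forall>(n::nat) (s::int) (n'::real) (\<beta>::real) (v::nat \<Rightarrow> real^2).
           \<bar>real_of_int s\<bar> \<le> (1 - \<epsilon>) * real n \<longrightarrow>
           real n powr (1/2 + \<alpha>) < n' \<longrightarrow> n' < real n \<longrightarrow>
           0 < \<beta> \<longrightarrow> \<beta> \<le> real n powr (-24) \<longrightarrow>
           (\<forall>q::real^2. real (card {i\<in>{..<n}. dist (v i) q \<le> \<beta> * real n ^ 6}) < real n - n') \<longrightarrow>
           rho_star n v s \<beta> \<le> C * sqrt (real n) / n'"
proof (intro exI[of _ "2 * (144 / \<epsilon> ^ 4 + 2 / \<epsilon>)"] conjI allI impI)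
  define K where "K = 144 / \<epsilon> ^ 4 + 2 / \<epsilon>"
  show "0 < 2 * K" unfolding K_def using assms(1) by (intro mult_pos_pos add_pos_pos) simp_all
  fix n :: nat and s :: int and n' \<beta> :: real and v :: "nat \<Rightarrow> real^2"
  assume s: "\<bar>real_of_int s\<bar> \<le> (1 - \<epsilon>) * real n" and n': "real n powr (1/2 + \<alpha>) < n'" "n' < real n"
    and "0 < \<beta>" and spread: "\<forall>q::real^2. real (card {i\<in>{..<n}. dist (v i) q \<le> \<beta> * real n ^ 6}) < real n - n'"
  have "n \<ge> 2"
  proof (rule ccontr)
    assume "\<not> n \<ge> 2"
    then have "n = 0 \<or> n = 1" by auto
    then show False using n' by auto
  qed
  then have "n' > 1" using n' assms(3) ge_one_powr_ge_zero[of "real n" "1/2 + \<alpha>"] by simp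
  obtain c Q where Q: "pair_matching {..<n} Q" "n' < 4 * real (card Q)"
    "\<forall>p\<in>Q. \<bar>v (fst p) $ c - v (snd p) $ c\<bar> > \<beta>"
    using exists_matching_coordinate_gap[OF \<open>n \<ge> 2\<close> \<open>0 < \<beta>\<close> spread] by blast
  then have "Q \<noteq> {}" using \<open>n' > 1\<close> by auto
  then have "rho_star n v s \<beta> \<le> K / sqrt (card Q)"
    using rho_star_le_matching[OF Q(1) _ Q(3)] assms(1,2) s \<open>0 < \<beta>\<close> unfolding K_def by simp
  also have "\<dots> \<le> K * (2 * sqrt (real n) / n')"
    using inverse_sqrt_le[OF \<open>n' > 1\<close> n'(2) Q(2)] assms(1)
    unfolding K_def by (simp add: divide_inverse mult_left_mono)
  also have "\<dots> = 2 * K * sqrt (real n) / n'" by simp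
  finally show "rho_star n v s \<beta> \<le> 2 * K * sqrt (real n) / n'" .
qed

end
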